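(* Any vector space over a division ring is locally trace equivalent to its underlying additive group. Hence the local trace equivalence class of an infinite vector space over a division ring is determined by the characteristic of the division ring.
   Context: A vector space over a division ring $\mathbb{E}$ is viewed as a structure in the language of abelian groups together with unary functions $v\mapsto\lambda v$ for each $\lambda\in\mathbb{E}$. "Definable" means with parameters. $\mathcal{N}$ locally trace defines $\mathcal{M}$ if there is a possibly infinite collection $\mathcal{E}$ of functions $M\to N$ such that every $\mathcal{M}$-definable subset of every $M^m$ is of the form $\{(a_1,\dots,a_m) : (f_1(a_{i_1}),\dots,f_n(a_{i_n}))\in Y\}$ for some $f_j\in\mathcal{E}$, $i_j\in\{1,\dots,m\}$ and $\mathcal{N}$-definable $Y\subseteq N^n$. A theory $T$ locally trace defines $T^*$ if some model of $T$ locally trace defines some model of $T^*$; two structures are locally trace equivalent if each of their theories locally trace defines the other. *)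

theory Defs
  imports Main
begin

datatype 'f trm = Var nat | App 'f "'f trm list"

datatype 'f fm = FEq "'f trm" "'f trm" | FNeg "'f fm" | FConj "'f fm" "'f fm" | FEx nat "'f fm"

text \<open>A structure: a carrier set together with an interpretation of the function symbols.
  The language is given by an arity function.\<close>
type_synonym ('a, 'f) struct = "'a set \<times> ('f \<Rightarrow> 'a list \<Rightarrow> 'a)"

primrec eval_trm :: "('f \<Rightarrow> 'a list \<Rightarrow> 'a) \<Rightarrow> (nat \<Rightarrow> 'a) \<Rightarrow> 'f trm \<Rightarrow> 'a" where
  "eval_trm I s (Var n) = s n"
| "eval_trm I s (App f ts) = I f (map (eval_trm I s) ts)"

primrec wf_trm :: "('f \<Rightarrow> nat) \<Rightarrow> 'f trm \<Rightarrow> bool" where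
  "wf_trm ar (Var n) = True"
| "wf_trm ar (App f ts) = (length ts = ar f \<and> list_all (wf_trm ar) ts)"

primrec fv_trm :: "'f trm \<Rightarrow> nat set" where
  "fv_trm (Var n) = {n}"
| "fv_trm (App f ts) = \<Union> (set (map fv_trm ts))"

primrec wf_fm :: "('f \<Rightarrow> nat) \<Rightarrow> 'f fm \<Rightarrow> bool" where
  "wf_fm ar (FEq t u) = (wf_trm ar t \<and> wf_trm ar u)"
| "wf_fm ar (FNeg \<phi>) = wf_fm ar \<phi>"
| "wf_fm ar (FConj \<phi> \<psi>) = (wf_fm ar \<phi> \<and> wf_fm ar \<psi>)"
| "wf_fm ar (FEx n \<phi>) = wf_fm ar \<phi>"

primrec fv_fm :: "'f fm \<Rightarrow> nat set" where
  "fv_fm (FEq t u) = fv_trm t \<union> fv_trm u"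
| "fv_fm (FNeg \<phi>) = fv_fm \<phi>"
| "fv_fm (FConj \<phi> \<psi>) = fv_fm \<phi> \<union> fv_fm \<psi>"
| "fv_fm (FEx n \<phi>) = fv_fm \<phi> - {n}"

primrec sat :: "('a, 'f) struct \<Rightarrow> (nat \<Rightarrow> 'a) \<Rightarrow> 'f fm \<Rightarrow> bool" where
  "sat M s (FEq t u) = (eval_trm (snd M) s t = eval_trm (snd M) s u)"
| "sat M s (FNeg \<phi>) = (\<not> sat M s \<phi>)"
| "sat M s (FConj \<phi> \<psi>) = (sat M s \<phi> \<and> sat M s \<psi>)"
| "sat M s (FEx n \<phi>) = (\<exists>a\<in>fst M. sat M (s(n := a)) \<phi>)"

definition is_struct :: "('f \<Rightarrow> nat) \<Rightarrow> ('a, 'f) struct \<Rightarrow> bool" where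
  "is_struct ar M \<longleftrightarrow> fst M \<noteq> {} \<and>
     (\<forall>f xs. length xs = ar f \<and> set xs \<subseteq> fst M \<longrightarrow> snd M f xs \<in> fst M)"

text \<open>The tuple occupies variables \<open>0..<m\<close>, parameters are assigned to the other variables.\<close>
definition definable :: "('f \<Rightarrow> nat) \<Rightarrow> ('a, 'f) struct \<Rightarrow> nat \<Rightarrow> 'a list set \<Rightarrow> bool" where
  "definable ar M m D \<longleftrightarrow> (\<exists>\<phi> p. wf_fm ar \<phi> \<and> range p \<subseteq> fst M \<and>
     D = {xs. length xs = m \<and> set xs \<subseteq> fst M \<and>
              sat M (\<lambda>i. if i < m then xs ! i else p i) \<phi>})"

definition elem_equiv :: "('f \<Rightarrow> nat) \<Rightarrow> ('a, 'f) struct \<Rightarrow> ('b, 'f) struct \<Rightarrow> bool" where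
  "elem_equiv ar M N \<longleftrightarrow> (\<forall>\<phi>. wf_fm ar \<phi> \<and> fv_fm \<phi> = {} \<longrightarrow>
     ((\<exists>s. range s \<subseteq> fst M \<and> sat M s \<phi>) \<longleftrightarrow> (\<exists>s. range s \<subseteq> fst N \<and> sat N s \<phi>)))"

definition loc_trace_defines ::
  "('g \<Rightarrow> nat) \<Rightarrow> ('b, 'g) struct \<Rightarrow> ('f \<Rightarrow> nat) \<Rightarrow> ('a, 'f) struct \<Rightarrow> bool" where
  "loc_trace_defines arN N arM M \<longleftrightarrow> (\<exists>E :: ('a \<Rightarrow> 'b) set.
     (\<forall>f\<in>E. f ` fst M \<subseteq> fst N) \<and>
     (\<forall>m D. definable arM M m D \<longrightarrow>
        (\<exists>fs idx Y. length idx = length fs \<and> set fs \<subseteq> E \<and> (\<forall>i\<in>set idx. i < m) \<and>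
           definable arN N (length fs) Y \<and>
           D = {xs. length xs = m \<and> set xs \<subseteq> fst M \<and>
                    map2 (\<lambda>f i. f (xs ! i)) fs idx \<in> Y})))"

text \<open>\<open>Th(N)\<close> locally trace defines \<open>Th(M)\<close>: some model of \<open>Th(N)\<close> (with carrier in
  type \<open>'c\<close>) locally trace defines some model of \<open>Th(M)\<close> (with carrier in type \<open>'d\<close>).\<close>
definition th_loc_trace_defines ::
  "'c itself \<Rightarrow> 'd itself \<Rightarrow> ('g \<Rightarrow> nat) \<Rightarrow> ('b, 'g) struct \<Rightarrow> ('f \<Rightarrow> nat) \<Rightarrow> ('a, 'f) struct \<Rightarrow> bool" where
  "th_loc_trace_defines _ _ arN N arM M \<longleftrightarrow>
     (\<exists>(N' :: ('c, 'g) struct) (M' :: ('d, 'f) struct).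
        is_struct arN N' \<and> is_struct arM M' \<and> elem_equiv arN N N' \<and> elem_equiv arM M M' \<and>
        loc_trace_defines arN N' arM M')"

definition loc_trace_equiv ::
  "'c itself \<Rightarrow> 'd itself \<Rightarrow> ('f \<Rightarrow> nat) \<Rightarrow> ('a, 'f) struct \<Rightarrow> ('g \<Rightarrow> nat) \<Rightarrow> ('b, 'g) struct \<Rightarrow> bool" where
  "loc_trace_equiv tc td arM M arN N \<longleftrightarrow>
     th_loc_trace_defines tc td arM M arN N \<and> th_loc_trace_defines td tc arN N arM M"

datatype gsym = GAdd | GNeg | GZero
datatype 'e vsym = VAdd | VNeg | VZero | VSc 'e

fun gar :: "gsym \<Rightarrow> nat" where
  "gar GAdd = 2" | "gar GNeg = 1" | "gar GZero = 0"

fun var :: "'e vsym \<Rightarrow> nat" where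
  "var VAdd = 2" | "var VNeg = 1" | "var VZero = 0" | "var (VSc _) = 1"

fun ginterp :: "gsym \<Rightarrow> 'v::ab_group_add list \<Rightarrow> 'v" where
  "ginterp GAdd xs = xs ! 0 + xs ! 1"
| "ginterp GNeg xs = - (xs ! 0)"
| "ginterp GZero xs = 0"

fun vinterp :: "('e \<Rightarrow> 'v \<Rightarrow> 'v) \<Rightarrow> 'e vsym \<Rightarrow> 'v::ab_group_add list \<Rightarrow> 'v" where
  "vinterp sc VAdd xs = xs ! 0 + xs ! 1"
| "vinterp sc VNeg xs = - (xs ! 0)"
| "vinterp sc VZero xs = 0"
| "vinterp sc (VSc c) xs = sc c (xs ! 0)"

definition grp_struct :: "'v::ab_group_add itself \<Rightarrow> ('v, gsym) struct" where
  "grp_struct _ = (UNIV, ginterp)"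

definition vs_struct :: "('e \<Rightarrow> 'v \<Rightarrow> 'v) \<Rightarrow> ('v::ab_group_add, 'e vsym) struct" where
  "vs_struct sc = (UNIV, vinterp sc)"

definition is_vector_space :: "('e::division_ring \<Rightarrow> 'v::ab_group_add \<Rightarrow> 'v) \<Rightarrow> bool" where
  "is_vector_space sc \<longleftrightarrow>
     (\<forall>a x y. sc a (x + y) = sc a x + sc a y) \<and>
     (\<forall>a b x. sc (a + b) x = sc a x + sc b x) \<and>
     (\<forall>a b x. sc (a * b) x = sc a (sc b x)) \<and>
     (\<forall>x. sc 1 x = x)"

end

(*
  Infinite vector spaces over a division ring K eliminate quantifiers down to boolean
  combinations of linear equations c_1 x_1 + ... + c_n x_n = 0 (with parameters among the x_i).
  Such an equation is the zero set of a sum of the unary maps x |-> c x and constants, i.e. a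
  parameter-free formula of the additive group evaluated along these maps, so the group locally
  trace defines the space. A finite space is handled point by point, and the other direction is
  trivial because the group language is a reduct.

  Quantifier elimination also shows that all infinite K-spaces are elementarily equivalent, so
  the free space K^(W) is a model of the theory of V. Since W and K share the prime field, a
  Zorn argument embeds W additively into K^(W), and the group of K^(W) then locally trace
  defines W. Transporting both models into one carrier type proves the second claim.
*)
theory Submission
  imports Defs "HOL.Modules" "HOL-Library.Poly_Mapping"
begin

lemma vector_space_laws:
  assumes "is_vector_space sc"
  shows "sc a (x + y) = sc a x + sc a y" "sc (a + b) x = sc a x + sc b x"
    "sc (a * b) x = sc a (sc b x)" "sc 1 x = x" "sc 0 x = 0" "sc a 0 = 0"
    "sc (- a) x = - sc a x" "sc a (- x) = - sc a x"
proof -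
  show add: "sc a (x + y) = sc a x + sc a y" "sc (a + b) x = sc a x + sc b x"
    and "sc (a * b) x = sc a (sc b x)" "sc 1 x = x"
    for a b x y using assms unfolding is_vector_space_def by blast+
  show zero: "sc 0 x = 0" "sc a 0 = 0" for a x
    using add(2)[of 0 0 x] add(1)[of a 0 0] by simp_all
  show "sc (- a) x = - sc a x" "sc a (- x) = - sc a x"
    using add(2)[of "- a" a x] add(1)[of a "- x" x] by (simp_all add: zero eq_neg_iff_add_eq_0)
qed

lemma fst_vs_struct [simp]: "fst (vs_struct sc) = UNIV"
  by (simp add: vs_struct_def)

lemma fst_grp_struct [simp]: "fst (grp_struct TYPE('v::ab_group_add)) = UNIV"
  by (simp add: grp_struct_def)

section \<open>Quantifier elimination for infinite vector spaces\<close>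

type_synonym 'k linform = "(nat \<times> 'k) list"

definition lf_eval :: "('k \<Rightarrow> 'v \<Rightarrow> 'v) \<Rightarrow> (nat \<Rightarrow> 'v) \<Rightarrow> 'k linform \<Rightarrow> 'v::ab_group_add" where
  "lf_eval sc s L = sum_list (map (\<lambda>(i, c). sc c (s i)) L)"

definition lf_scale :: "'k::times \<Rightarrow> 'k linform \<Rightarrow> 'k linform" where
  "lf_scale c L = map (\<lambda>(i, d). (i, c * d)) L"

definition lf_vars :: "'k linform \<Rightarrow> nat set" where
  "lf_vars L = fst ` set L"

definition lf_coeff :: "nat \<Rightarrow> 'k linform \<Rightarrow> 'k::monoid_add" where
  "lf_coeff y L = sum_list (map snd (filter (\<lambda>(i, c). i = y) L))"

definition lf_drop :: "nat \<Rightarrow> 'k linform \<Rightarrow> 'k linform" where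
  "lf_drop y L = filter (\<lambda>(i, c). i \<noteq> y) L"

lemma var_neq_Suc_Suc_Suc: "Suc (Suc (Suc n)) = var f \<Longrightarrow> False"
  by (cases f) auto

fun lf_of_trm :: "'k::division_ring vsym trm \<Rightarrow> 'k linform" where
  "lf_of_trm (Var n) = [(n, 1)]"
| "lf_of_trm (App VAdd [t, u]) = lf_of_trm t @ lf_of_trm u"
| "lf_of_trm (App VNeg [t]) = lf_scale (- 1) (lf_of_trm t)"
| "lf_of_trm (App (VSc c) [t]) = lf_scale c (lf_of_trm t)"
| "lf_of_trm (App _ _) = []"

lemma lf_eval_simps [simp]:
  "lf_eval sc s [] = 0"
  "lf_eval sc s ((i, c) # L) = sc c (s i) + lf_eval sc s L"
  "lf_eval sc s (L @ L') = lf_eval sc s L + lf_eval sc s L'"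
  by (simp_all add: lf_eval_def)

lemma lf_vars_simps [simp]:
  "lf_vars [] = {}" "lf_vars (p # L) = insert (fst p) (lf_vars L)"
  "lf_vars (L @ L') = lf_vars L \<union> lf_vars L'"
  "lf_vars (lf_drop y L) = lf_vars L - {y}"
  by (auto simp: lf_vars_def lf_drop_def)

lemma lf_vars_scale [simp]: "lf_vars (lf_scale c L) = lf_vars L"
  by (force simp: lf_vars_def lf_scale_def)

lemma lf_eval_scale:
  assumes "is_vector_space sc"
  shows "lf_eval sc s (lf_scale c L) = sc c (lf_eval sc s L)"
  by (induction L) (auto simp: lf_scale_def vector_space_laws[OF assms])

lemma lf_eval_of_trm:
  assumes "is_vector_space sc" and "wf_trm var t"
  shows "eval_trm (vinterp sc) s t = lf_eval sc s (lf_of_trm t)"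
  using assms(2)
  by (induction t rule: lf_of_trm.induct)
     (auto simp: lf_eval_scale[OF assms(1)] vector_space_laws[OF assms(1)] numeral_2_eq_2
       length_Suc_conv elim!: var.elims dest: var_neq_Suc_Suc_Suc)

lemma lf_vars_of_trm: "lf_vars (lf_of_trm t) \<subseteq> fv_trm t"
  by (induction t rule: lf_of_trm.induct) auto

lemma lf_eval_split:
  assumes "is_vector_space sc"
  shows "lf_eval sc s L = sc (lf_coeff y L) (s y) + lf_eval sc s (lf_drop y L)"
  by (induction L)
     (auto simp: lf_coeff_def lf_drop_def vector_space_laws[OF assms] algebra_simps)

lemma lf_eval_upd: "y \<notin> lf_vars L \<Longrightarrow> lf_eval sc (s(y := a)) L = lf_eval sc s L"
  by (induction L) auto

datatype 'k lf_qf = LfZero "'k linform" | LfNeg "'k lf_qf" | LfConj "'k lf_qf" "'k lf_qf"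

primrec lf_sat :: "('k \<Rightarrow> 'v \<Rightarrow> 'v) \<Rightarrow> (nat \<Rightarrow> 'v::ab_group_add) \<Rightarrow> 'k lf_qf \<Rightarrow> bool" where
  "lf_sat sc s (LfZero L) \<longleftrightarrow> lf_eval sc s L = 0"
| "lf_sat sc s (LfNeg \<psi>) \<longleftrightarrow> \<not> lf_sat sc s \<psi>"
| "lf_sat sc s (LfConj \<psi> \<chi>) \<longleftrightarrow> lf_sat sc s \<psi> \<and> lf_sat sc s \<chi>"

primrec lf_qf_vars :: "'k lf_qf \<Rightarrow> nat set" where
  "lf_qf_vars (LfZero L) = lf_vars L"
| "lf_qf_vars (LfNeg \<psi>) = lf_qf_vars \<psi>"
| "lf_qf_vars (LfConj \<psi> \<chi>) = lf_qf_vars \<psi> \<union> lf_qf_vars \<chi>"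

primrec lf_atoms :: "'k lf_qf \<Rightarrow> 'k linform list" where
  "lf_atoms (LfZero L) = [L]"
| "lf_atoms (LfNeg \<psi>) = lf_atoms \<psi>"
| "lf_atoms (LfConj \<psi> \<chi>) = lf_atoms \<psi> @ lf_atoms \<chi>"

definition lf_false :: "'k lf_qf" where
  "lf_false = LfNeg (LfZero [])"

definition lf_disj :: "'k lf_qf list \<Rightarrow> 'k lf_qf" where
  "lf_disj \<psi>s = foldr (\<lambda>\<psi> \<chi>. LfNeg (LfConj (LfNeg \<psi>) (LfNeg \<chi>))) \<psi>s lf_false"

lemma lf_sat_disj: "lf_sat sc s (lf_disj \<psi>s) \<longleftrightarrow> (\<exists>\<psi>\<in>set \<psi>s. lf_sat sc s \<psi>)"
  by (induction \<psi>s) (auto simp: lf_disj_def lf_false_def)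

lemma lf_qf_vars_disj: "lf_qf_vars (lf_disj \<psi>s) = \<Union> (lf_qf_vars ` set \<psi>s)"
  by (induction \<psi>s) (auto simp: lf_disj_def lf_false_def)

text \<open>Eliminating \<open>\<exists>y\<close> from \<open>\<psi>\<close>: either \<open>y\<close> is one of the finitely many values
  \<open>R\<close> that solve an atom of \<open>\<psi>\<close> for \<open>y\<close>, or \<open>y\<close> avoids all of them, and then every atom
  containing \<open>y\<close> is false; in an infinite space such a generic \<open>y\<close> exists.\<close>

definition lf_candidates :: "nat \<Rightarrow> 'k::division_ring lf_qf \<Rightarrow> 'k linform list" where
  "lf_candidates y \<psi> =
     [lf_scale (- inverse (lf_coeff y L)) (lf_drop y L). L \<leftarrow> lf_atoms \<psi>, lf_coeff y L \<noteq> 0]"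

primrec lf_subst :: "nat \<Rightarrow> 'k::division_ring linform \<Rightarrow> 'k lf_qf \<Rightarrow> 'k lf_qf" where
  "lf_subst y R (LfZero L) = LfZero (lf_drop y L @ lf_scale (lf_coeff y L) R)"
| "lf_subst y R (LfNeg \<psi>) = LfNeg (lf_subst y R \<psi>)"
| "lf_subst y R (LfConj \<psi> \<chi>) = LfConj (lf_subst y R \<psi>) (lf_subst y R \<chi>)"

primrec lf_generic :: "nat \<Rightarrow> 'k::division_ring lf_qf \<Rightarrow> 'k lf_qf" where
  "lf_generic y (LfZero L) = (if lf_coeff y L \<noteq> 0 then lf_false else LfZero (lf_drop y L))"
| "lf_generic y (LfNeg \<psi>) = LfNeg (lf_generic y \<psi>)"
| "lf_generic y (LfConj \<psi> \<chi>) = LfConj (lf_generic y \<psi>) (lf_generic y \<chi>)"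

definition lf_elim :: "nat \<Rightarrow> 'k::division_ring lf_qf \<Rightarrow> 'k lf_qf" where
  "lf_elim y \<psi> = lf_disj (lf_generic y \<psi> # map (\<lambda>R. lf_subst y R \<psi>) (lf_candidates y \<psi>))"

lemma lf_vars_candidates: "R \<in> set (lf_candidates y \<psi>) \<Longrightarrow> lf_vars R \<subseteq> lf_qf_vars \<psi> - {y}"
proof -
  have "L \<in> set (lf_atoms \<psi>) \<Longrightarrow> lf_vars L \<subseteq> lf_qf_vars \<psi>" for L
    by (induction \<psi>) auto
  then show "R \<in> set (lf_candidates y \<psi>) \<Longrightarrow> lf_vars R \<subseteq> lf_qf_vars \<psi> - {y}"
    by (fastforce simp: lf_candidates_def)
qed

lemma lf_sat_subst:
  assumes "is_vector_space sc" and "y \<notin> lf_vars R"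
  shows "lf_sat sc s (lf_subst y R \<psi>) \<longleftrightarrow> lf_sat sc (s(y := lf_eval sc s R)) \<psi>"
proof (induction \<psi>)
  case (LfZero L)
  have "lf_eval sc (s(y := lf_eval sc s R)) L =
      sc (lf_coeff y L) (lf_eval sc s R) + lf_eval sc s (lf_drop y L)"
    using lf_eval_split[OF assms(1), of "s(y := lf_eval sc s R)" L y]
    by (simp add: lf_eval_upd)
  then show ?case by (simp add: lf_eval_scale[OF assms(1)] add.commute del: fun_upd_apply)
qed auto

lemma lf_sat_generic:
  assumes "is_vector_space sc" and "a \<notin> lf_eval sc s ` set (lf_candidates y \<psi>)"
  shows "lf_sat sc (s(y := a)) \<psi> \<longleftrightarrow> lf_sat sc s (lf_generic y \<psi>)"
  using assms(2)
proof (induction \<psi>)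
  case (LfZero L)
  let ?c = "lf_coeff y L" and ?r = "lf_eval sc s (lf_drop y L)"
  have split: "lf_eval sc (s(y := a)) L = sc ?c a + ?r"
    using lf_eval_split[OF assms(1), of "s(y := a)" L y] by (simp add: lf_eval_upd)
  show ?case
  proof (cases "?c = 0")
    case True
    then show ?thesis using split by (simp add: vector_space_laws[OF assms(1)] del: fun_upd_apply)
  next
    case False
    have "sc ?c a + ?r \<noteq> 0"
    proof
      assume "sc ?c a + ?r = 0"
      have "a = sc (inverse ?c * ?c) a"
        using False by (simp add: vector_space_laws[OF assms(1)])
      also have "\<dots> = sc (inverse ?c) (sc ?c a)"
        by (simp add: vector_space_laws[OF assms(1)])
      also have "sc ?c a = - ?r"
        using \<open>sc ?c a + ?r = 0\<close> by (simp add: eq_neg_iff_add_eq_0)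
      finally have "a = lf_eval sc s (lf_scale (- inverse ?c) (lf_drop y L))"
        by (simp add: lf_eval_scale[OF assms(1)] vector_space_laws[OF assms(1)])
      then show False using LfZero False by (auto simp: lf_candidates_def)
    qed
    then show ?thesis using split False by (simp add: lf_false_def del: fun_upd_apply)
  qed
qed (auto simp: lf_candidates_def)

lemma lf_sat_elim_iff:
  "lf_sat sc s (lf_elim y \<psi>) \<longleftrightarrow>
    lf_sat sc s (lf_generic y \<psi>) \<or> (\<exists>R\<in>set (lf_candidates y \<psi>). lf_sat sc s (lf_subst y R \<psi>))"
  by (simp add: lf_elim_def lf_sat_disj)

lemma lf_sat_elim_if_lf_sat_upd:
  assumes "is_vector_space sc" and a: "lf_sat sc (s(y := a)) \<psi>"
  shows "lf_sat sc s (lf_elim y \<psi>)"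
proof (cases "a \<in> lf_eval sc s ` set (lf_candidates y \<psi>)")
  case True
  then obtain R where R: "R \<in> set (lf_candidates y \<psi>)" and "a = lf_eval sc s R"
    by blast
  moreover have "y \<notin> lf_vars R"
    using lf_vars_candidates[OF R] by blast
  ultimately have "lf_sat sc s (lf_subst y R \<psi>)"
    using a by (simp add: lf_sat_subst[OF assms(1)])
  with R show ?thesis
    unfolding lf_sat_elim_iff by blast
next
  case False
  then have "lf_sat sc s (lf_generic y \<psi>)"
    using a by (simp add: lf_sat_generic[OF assms(1)])
  then show ?thesis
    unfolding lf_sat_elim_iff ..
qed

lemma lf_sat_upd_if_lf_sat_elim:
  fixes sc :: "'k::division_ring \<Rightarrow> 'v::ab_group_add \<Rightarrow> 'v"
  assumes "is_vector_space sc" and "infinite (UNIV :: 'v set)"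
    and "lf_sat sc s (lf_elim y \<psi>)"
  shows "\<exists>a. lf_sat sc (s(y := a)) \<psi>"
proof -
  consider "lf_sat sc s (lf_generic y \<psi>)"
    | R where "R \<in> set (lf_candidates y \<psi>)" and "lf_sat sc s (lf_subst y R \<psi>)"
    using assms(3) unfolding lf_sat_elim_iff by blast
  then show ?thesis
  proof cases
    case 1
    have "finite (lf_eval sc s ` set (lf_candidates y \<psi>))"
      by simp
    then obtain a where "a \<notin> lf_eval sc s ` set (lf_candidates y \<psi>)"
      using ex_new_if_finite[OF assms(2)] by blast
    then have "lf_sat sc (s(y := a)) \<psi>"
      using 1 by (simp add: lf_sat_generic[OF assms(1)])
    then show ?thesis ..
  next
    case 2
    then have "y \<notin> lf_vars R"
      using lf_vars_candidates by blast
    then have "lf_sat sc (s(y := lf_eval sc s R)) \<psi>"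
      using 2 by (simp add: lf_sat_subst[OF assms(1)])
    then show ?thesis ..
  qed
qed

lemma lf_sat_elim:
  fixes sc :: "'k::division_ring \<Rightarrow> 'v::ab_group_add \<Rightarrow> 'v"
  assumes "is_vector_space sc" and "infinite (UNIV :: 'v set)"
  shows "(\<exists>a. lf_sat sc (s(y := a)) \<psi>) \<longleftrightarrow> lf_sat sc s (lf_elim y \<psi>)"
  using lf_sat_elim_if_lf_sat_upd[OF assms(1)] lf_sat_upd_if_lf_sat_elim[OF assms] by blast

lemma lf_qf_vars_elim: "lf_qf_vars (lf_elim y \<psi>) \<subseteq> lf_qf_vars \<psi> - {y}"
proof -
  have "lf_qf_vars (lf_generic y \<psi>) \<subseteq> lf_qf_vars \<psi> - {y}"
    by (induction \<psi>) (auto simp: lf_false_def)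
  moreover have "lf_qf_vars (lf_subst y R \<psi>) \<subseteq> lf_qf_vars \<psi> - {y}"
    if "R \<in> set (lf_candidates y \<psi>)" for R
  proof -
    have "lf_qf_vars (lf_subst y R \<psi>) \<subseteq> lf_qf_vars \<psi> - {y} \<union> lf_vars R"
      by (induction \<psi>) auto
    with lf_vars_candidates[OF that] show ?thesis
      by blast
  qed
  ultimately show ?thesis
    by (simp add: lf_elim_def lf_qf_vars_disj) blast
qed

primrec lf_qf_of_fm :: "'k::division_ring vsym fm \<Rightarrow> 'k lf_qf" where
  "lf_qf_of_fm (FEq t u) = LfZero (lf_of_trm t @ lf_scale (- 1) (lf_of_trm u))"
| "lf_qf_of_fm (FNeg \<phi>) = LfNeg (lf_qf_of_fm \<phi>)"
| "lf_qf_of_fm (FConj \<phi> \<psi>) = LfConj (lf_qf_of_fm \<phi>) (lf_qf_of_fm \<psi>)"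
| "lf_qf_of_fm (FEx n \<phi>) = lf_elim n (lf_qf_of_fm \<phi>)"

theorem sat_vs_iff_lf_sat:
  fixes sc :: "'k::division_ring \<Rightarrow> 'v::ab_group_add \<Rightarrow> 'v"
  assumes "is_vector_space sc" and "infinite (UNIV :: 'v set)" and "wf_fm var \<phi>"
  shows "sat (vs_struct sc) s \<phi> \<longleftrightarrow> lf_sat sc s (lf_qf_of_fm \<phi>)"
  using assms(3)
proof (induction \<phi> arbitrary: s)
  case (FEq t u)
  then show ?case
    by (simp add: vs_struct_def lf_eval_of_trm[OF assms(1)] lf_eval_scale[OF assms(1)]
        vector_space_laws[OF assms(1)])
next
  case (FEx n \<phi>)
  then show ?case by (simp add: vs_struct_def flip: lf_sat_elim[OF assms(1,2)])
qed auto

lemma lf_qf_vars_of_fm: "lf_qf_vars (lf_qf_of_fm \<phi>) \<subseteq> fv_fm \<phi>"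
proof (induction \<phi>)
  case (FEq t u)
  then show ?case using lf_vars_of_trm[of t] lf_vars_of_trm[of u] by auto
next
  case (FEx n \<phi>)
  then show ?case using lf_qf_vars_elim[of n "lf_qf_of_fm \<phi>"] by auto
qed auto

lemma lf_sat_closed:
  "lf_qf_vars \<psi> = {} \<Longrightarrow> lf_sat sc s \<psi> \<longleftrightarrow> lf_sat sc' s' \<psi>"
  by (induction \<psi>) (auto simp: lf_vars_def)

theorem elem_equiv_infinite_vs:
  fixes sc :: "'k::division_ring \<Rightarrow> 'v::ab_group_add \<Rightarrow> 'v"
    and sc' :: "'k \<Rightarrow> 'w::ab_group_add \<Rightarrow> 'w"
  assumes "is_vector_space sc" and "infinite (UNIV :: 'v set)"
    and "is_vector_space sc'" and "infinite (UNIV :: 'w set)"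
  shows "elem_equiv var (vs_struct sc) (vs_struct sc')"
  unfolding elem_equiv_def
proof (intro allI impI)
  fix \<phi> :: "'k vsym fm"
  assume \<phi>: "wf_fm var \<phi> \<and> fv_fm \<phi> = {}"
  then have closed: "lf_qf_vars (lf_qf_of_fm \<phi>) = {}"
    using lf_qf_vars_of_fm[of \<phi>] by blast
  have "sat (vs_struct sc) s \<phi> \<longleftrightarrow> lf_sat sc (\<lambda>_. 0) (lf_qf_of_fm \<phi>)" for s
    using sat_vs_iff_lf_sat[OF assms(1,2)] \<phi> lf_sat_closed[OF closed] by simp
  moreover have "sat (vs_struct sc') s \<phi> \<longleftrightarrow> lf_sat sc (\<lambda>_. 0) (lf_qf_of_fm \<phi>)" for s
    using sat_vs_iff_lf_sat[OF assms(3,4)] \<phi> lf_sat_closed[OF closed] by simp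
  ultimately show "(\<exists>s. range s \<subseteq> fst (vs_struct sc) \<and> sat (vs_struct sc) s \<phi>) \<longleftrightarrow>
      (\<exists>s. range s \<subseteq> fst (vs_struct sc') \<and> sat (vs_struct sc') s \<phi>)"
    by simp
qed

section \<open>Preimages of group-definable sets\<close>

fun sum_trm :: "nat \<Rightarrow> gsym trm" where
  "sum_trm 0 = App GZero []"
| "sum_trm (Suc n) = App GAdd [sum_trm n, Var n]"

lemma wf_sum_trm: "wf_trm gar (sum_trm n)"
  by (induction n) (auto simp: numeral_2_eq_2)

lemma eval_sum_trm: "eval_trm ginterp s (sum_trm n) = (\<Sum>j<n. s j)"
  by (induction n) auto

primrec shift_trm :: "nat \<Rightarrow> 'f trm \<Rightarrow> 'f trm" where
  "shift_trm k (Var j) = Var (j + k)"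
| "shift_trm k (App f ts) = App f (map (shift_trm k) ts)"

primrec shift_fm :: "nat \<Rightarrow> 'f fm \<Rightarrow> 'f fm" where
  "shift_fm k (FEq t u) = FEq (shift_trm k t) (shift_trm k u)"
| "shift_fm k (FNeg \<phi>) = FNeg (shift_fm k \<phi>)"
| "shift_fm k (FConj \<phi> \<psi>) = FConj (shift_fm k \<phi>) (shift_fm k \<psi>)"
| "shift_fm k (FEx n \<phi>) = FEx (n + k) (shift_fm k \<phi>)"

lemma eval_shift_trm: "eval_trm I s (shift_trm k t) = eval_trm I (\<lambda>j. s (j + k)) t"
  by (induction t) (simp_all cong: map_cong)

lemma wf_shift_trm: "wf_trm ar (shift_trm k t) = wf_trm ar t"
  by (induction t) (simp_all add: list_all_iff)

lemma wf_shift_fm: "wf_fm ar (shift_fm k \<phi>) = wf_fm ar \<phi>"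
  by (induction \<phi>) (simp_all add: wf_shift_trm)

lemma sat_shift_fm: "sat M s (shift_fm k \<phi>) = sat M (\<lambda>j. s (j + k)) \<phi>"
proof (induction \<phi> arbitrary: s)
  case (FEx n \<phi>)
  have "(\<lambda>j. (s(n + k := a)) (j + k)) = (\<lambda>j. s (j + k))(n := a)" for a
    by auto
  then show ?case using FEx by simp
qed (simp_all add: eval_shift_trm)

text \<open>Quantifying over every assignment \<open>t\<close> that agrees with the trace on the first
  \<open>length fs\<close> variables makes \<open>\<chi>\<close> a parameter-free formula in these variables.\<close>

definition grp_pullback :: "('y \<Rightarrow> 'x::ab_group_add) set \<Rightarrow> nat \<Rightarrow> 'y list set \<Rightarrow> bool" where
  "grp_pullback E m S \<longleftrightarrow> (\<exists>fs idx \<chi>. set fs \<subseteq> E \<and> length idx = length fs \<and>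
     (\<forall>i\<in>set idx. i < m) \<and> wf_fm gar \<chi> \<and>
     (\<forall>xs t. length xs = m \<longrightarrow> (\<forall>j < length fs. t j = (fs ! j) (xs ! (idx ! j))) \<longrightarrow>
        (xs \<in> S \<longleftrightarrow> sat (grp_struct TYPE('x)) t \<chi>)))"

lemma grp_pullback_cong:
  assumes "grp_pullback E m S" and "\<And>xs. length xs = m \<Longrightarrow> xs \<in> S \<longleftrightarrow> xs \<in> S'"
  shows "grp_pullback E m S'"
  using assms unfolding grp_pullback_def by blast

lemma grp_pullback_Compl:
  assumes "grp_pullback E m S"
  shows "grp_pullback E m (- S)"
proof -
  obtain fs idx \<chi> where "set fs \<subseteq> E" "length idx = length fs" "\<forall>i\<in>set idx. i < m" "wf_fm gar \<chi>"
    "\<forall>xs t. length xs = m \<longrightarrow> (\<forall>j < length fs. t j = (fs ! j) (xs ! (idx ! j))) \<longrightarrow>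
        (xs \<in> S \<longleftrightarrow> sat (grp_struct TYPE('b)) t \<chi>)"
    using assms unfolding grp_pullback_def by blast
  then show ?thesis
    unfolding grp_pullback_def by (intro exI[of _ fs] exI[of _ idx] exI[of _ "FNeg \<chi>"]) auto
qed

lemma grp_pullback_UNIV: "grp_pullback E m UNIV"
  unfolding grp_pullback_def
  by (intro exI[of _ "[]"] exI[of _ "[]"] exI[of _ "FEq (Var 0) (Var 0)"]) simp

lemma grp_pullback_Int:
  assumes "grp_pullback E m S" and "grp_pullback E m S'"
  shows "grp_pullback E m (S \<inter> S')"
proof -
  obtain fs idx \<chi> where S: "set fs \<subseteq> E" "length idx = length fs" "\<forall>i\<in>set idx. i < m"
    "wf_fm gar \<chi>" "\<And>xs t. length xs = m \<Longrightarrow> (\<forall>j < length fs. t j = (fs ! j) (xs ! (idx ! j))) \<Longrightarrow>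
        xs \<in> S \<longleftrightarrow> sat (grp_struct TYPE('b)) t \<chi>"
    using assms(1) unfolding grp_pullback_def by metis
  obtain fs' idx' \<chi>' where S': "set fs' \<subseteq> E" "length idx' = length fs'" "\<forall>i\<in>set idx'. i < m"
    "wf_fm gar \<chi>'" "\<And>xs t. length xs = m \<Longrightarrow> (\<forall>j < length fs'. t j = (fs' ! j) (xs ! (idx' ! j))) \<Longrightarrow>
        xs \<in> S' \<longleftrightarrow> sat (grp_struct TYPE('b)) t \<chi>'"
    using assms(2) unfolding grp_pullback_def by metis
  let ?n = "length fs"
  show ?thesis
    unfolding grp_pullback_def
  proof (intro exI[of _ "fs @ fs'"] exI[of _ "idx @ idx'"] exI[of _ "FConj \<chi> (shift_fm ?n \<chi>')"]
      conjI allI impI)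
    fix xs :: "'a list" and t
    assume "length xs = m" and t: "\<forall>j < length (fs @ fs'). t j = ((fs @ fs') ! j) (xs ! ((idx @ idx') ! j))"
    then have "xs \<in> S \<longleftrightarrow> sat (grp_struct TYPE('b)) t \<chi>"
      using S(2) by (intro S(5)) (auto simp: nth_append)
    moreover have "xs \<in> S' \<longleftrightarrow> sat (grp_struct TYPE('b)) (\<lambda>j. t (j + ?n)) \<chi>'"
      using \<open>length xs = m\<close> t S(2) by (intro S'(5)) (auto simp: nth_append)
    ultimately show "xs \<in> S \<inter> S' \<longleftrightarrow> sat (grp_struct TYPE('b)) t (FConj \<chi> (shift_fm ?n \<chi>'))"
      by (simp add: sat_shift_fm)
  qed (use S S' in \<open>auto simp: wf_shift_fm\<close>)
qed

lemma grp_pullback_Un: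
  assumes "grp_pullback E m S" and "grp_pullback E m S'"
  shows "grp_pullback E m (S \<union> S')"
proof -
  have "S \<union> S' = - (- S \<inter> - S')"
    by blast
  then show ?thesis
    using grp_pullback_Compl[OF grp_pullback_Int[OF grp_pullback_Compl grp_pullback_Compl]] assms
    by simp
qed

lemma grp_pullback_finite:
  assumes "finite S" and "\<And>u. grp_pullback E m {u}"
  shows "grp_pullback E m S"
  using assms(1)
proof (induction S rule: finite_induct)
  case empty
  show ?case using grp_pullback_Compl[OF grp_pullback_UNIV] by simp
next
  case (insert u S)
  then show ?case using grp_pullback_Un[OF assms(2) insert.IH] by simp
qed

lemma grp_pullback_Nil: "grp_pullback E 0 S"
proof (cases "[] \<in> S")
  case True
  then show ?thesis by (intro grp_pullback_cong[OF grp_pullback_UNIV]) simp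
next
  case False
  then show ?thesis by (intro grp_pullback_cong[OF grp_pullback_Compl[OF grp_pullback_UNIV]]) simp
qed

lemma grp_pullback_sum_eq_0:
  assumes "set fs \<subseteq> E" and "length idx = length fs" and "\<forall>i\<in>set idx. i < m"
  shows "grp_pullback E m {xs. (\<Sum>j<length fs. (fs ! j) (xs ! (idx ! j))) = (0::'x::ab_group_add)}"
  unfolding grp_pullback_def
proof (intro exI[of _ fs] exI[of _ idx] exI[of _ "FEq (sum_trm (length fs)) (App GZero [])"]
    conjI allI impI)
  fix xs :: "'a list" and t
  assume "\<forall>j < length fs. t j = (fs ! j) (xs ! (idx ! j))"
  then have "(\<Sum>j<length fs. (fs ! j) (xs ! (idx ! j))) = (\<Sum>j<length fs. t j)"
    by (intro sum.cong) auto
  then show "xs \<in> {xs. (\<Sum>j<length fs. (fs ! j) (xs ! (idx ! j))) = 0} \<longleftrightarrow>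
      sat (grp_struct TYPE('x)) t (FEq (sum_trm (length fs)) (App GZero []))"
    by (simp add: grp_struct_def eval_sum_trm)
qed (use assms wf_sum_trm in auto)

lemma loc_trace_defines_grp_if_pullbacks:
  fixes M :: "('y, 'f) struct" and E :: "('y \<Rightarrow> 'x::ab_group_add) set"
  assumes "\<And>m D. definable arM M m D \<Longrightarrow>
      \<exists>S. grp_pullback E m S \<and> D = {xs. length xs = m \<and> set xs \<subseteq> fst M \<and> xs \<in> S}"
  shows "loc_trace_defines gar (grp_struct TYPE('x)) arM M"
  unfolding loc_trace_defines_def
proof (intro exI[of _ E] conjI allI impI ballI)
  fix m D
  assume "definable arM M m D"
  then obtain S where D: "D = {xs. length xs = m \<and> set xs \<subseteq> fst M \<and> xs \<in> S}"
    and "grp_pullback E m S"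
    using assms by blast
  then obtain fs idx \<chi> where S: "set fs \<subseteq> E" "length idx = length fs" "\<forall>i\<in>set idx. i < m"
    "wf_fm gar \<chi>" "\<forall>xs t. length xs = m \<longrightarrow> (\<forall>j < length fs. t j = (fs ! j) (xs ! (idx ! j))) \<longrightarrow>
        (xs \<in> S \<longleftrightarrow> sat (grp_struct TYPE('x)) t \<chi>)"
    unfolding grp_pullback_def by blast
  define Y where "Y = {ys. length ys = length fs \<and> set ys \<subseteq> fst (grp_struct TYPE('x)) \<and>
     sat (grp_struct TYPE('x)) (\<lambda>j. if j < length fs then ys ! j else 0) \<chi>}"
  have "definable gar (grp_struct TYPE('x)) (length fs) Y"
    unfolding definable_def Y_def using S(4) by (intro exI[of _ \<chi>] exI[of _ "\<lambda>_. 0"]) simp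
  moreover have "xs \<in> S \<longleftrightarrow> map2 (\<lambda>f i. f (xs ! i)) fs idx \<in> Y" if "length xs = m" for xs
  proof -
    have "xs \<in> S \<longleftrightarrow> sat (grp_struct TYPE('x))
        (\<lambda>j. if j < length fs then map2 (\<lambda>f i. f (xs ! i)) fs idx ! j else 0) \<chi>"
      using S(2,5) that by simp
    then show ?thesis
      unfolding Y_def using S(2) by simp
  qed
  then have "D = {xs. length xs = m \<and> set xs \<subseteq> fst M \<and> map2 (\<lambda>f i. f (xs ! i)) fs idx \<in> Y}"
    unfolding D by blast
  ultimately show "\<exists>fs idx Y. length idx = length fs \<and> set fs \<subseteq> E \<and> (\<forall>i\<in>set idx. i < m) \<and>
      definable gar (grp_struct TYPE('x)) (length fs) Y \<and>
      D = {xs. length xs = m \<and> set xs \<subseteq> fst M \<and> map2 (\<lambda>f i. f (xs ! i)) fs idx \<in> Y}"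
    using S(1-3) by blast
qed simp

section \<open>A vector space and its additive group\<close>

lemma grp_pullback_eq_0:
  assumes "f \<in> E" and "k < m"
  shows "grp_pullback E m {xs. f (xs ! k) = 0}"
  using grp_pullback_sum_eq_0[of "[f]" E "[k]" m] assms by simp

lemma grp_pullback_singleton:
  fixes t :: "'y \<Rightarrow> 'y \<Rightarrow> 'x::ab_group_add"
  assumes "\<And>u. t u \<in> E" and "\<And>u x. t u x = 0 \<longleftrightarrow> x = u"
  shows "grp_pullback E m {us}"
proof (cases "length us = m")
  case True
  have "grp_pullback E m {xs. \<forall>i<k. xs ! i = us ! i}" if "k \<le> m" for k
    using that
  proof (induction k)
    case 0
    show ?case by (rule grp_pullback_cong[OF grp_pullback_UNIV]) simp
  next
    case (Suc k)
    have "grp_pullback E m {xs. t (us ! k) (xs ! k) = 0}"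
      using Suc.prems assms(1) by (intro grp_pullback_eq_0) auto
    then have "grp_pullback E m {xs. xs ! k = us ! k}"
      by (rule grp_pullback_cong) (simp add: assms(2))
    with Suc show ?case
      by (auto intro: grp_pullback_cong[OF grp_pullback_Int] simp: less_Suc_eq)
  qed
  from this[of m] show ?thesis
    by (rule grp_pullback_cong) (auto intro: nth_equalityI simp: True)
next
  case False
  then show ?thesis
    by (intro grp_pullback_cong[OF grp_pullback_Compl[OF grp_pullback_UNIV]]) auto
qed

lemma loc_trace_defines_grp_finite:
  fixes M :: "('v::ab_group_add, 'f) struct"
  assumes "finite (UNIV :: 'v set)"
  shows "loc_trace_defines gar (grp_struct TYPE('v)) arM M"
proof -
  define a :: 'v where "a = (SOME a. a \<noteq> 0)"
  have test: "(if x = u then 0 else a) = 0 \<longleftrightarrow> x = u" for x u :: 'v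
  proof (cases "x = u")
    case False
    then have "x - u \<noteq> 0" by simp
    then have "a \<noteq> 0" unfolding a_def by (rule someI)
    with False show ?thesis by simp
  qed simp
  let ?E = "range (\<lambda>u x :: 'v. if x = u then 0 else a)"
  show ?thesis
  proof (rule loc_trace_defines_grp_if_pullbacks[where E = ?E])
    fix m D
    assume "definable arM M m D"
    then have D: "D = {xs. length xs = m \<and> set xs \<subseteq> fst M \<and> xs \<in> D}"
      unfolding definable_def by auto
    then have "finite D"
      using finite_lists_length_eq[OF assms, of m] by (auto elim: finite_subset[rotated])
    moreover have "grp_pullback ?E m {us}" for us
      by (rule grp_pullback_singleton[where t = "\<lambda>u x. if x = u then 0 else a"]) (simp_all add: test)
    ultimately show "\<exists>S. grp_pullback ?E m S \<and> D = {xs. length xs = m \<and> set xs \<subseteq> fst M \<and> xs \<in> S}"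
      using D grp_pullback_finite by blast
  qed
qed

lemma grp_pullback_lf_sat:
  fixes sc :: "'k::division_ring \<Rightarrow> 'y::ab_group_add \<Rightarrow> 'y" and h :: "'y \<Rightarrow> 'x::ab_group_add"
  assumes "additive h" and "inj h" and "0 < m"
    and "\<And>c. (\<lambda>x. h (sc c x)) \<in> E" and "\<And>b. (\<lambda>_. b) \<in> E"
  shows "grp_pullback E m {xs. lf_sat sc (\<lambda>i. if i < m then xs ! i else p i) \<psi>}"
proof (induction \<psi>)
  case (LfZero L)
  define fs where "fs = map (\<lambda>(i, c). if i < m then (\<lambda>x. h (sc c x)) else (\<lambda>_. h (sc c (p i)))) L"
  define idx where "idx = map (\<lambda>(i, c). if i < m then i else 0) L"
  have h_eq_0: "h x = 0 \<longleftrightarrow> x = 0" for x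
    using assms(2) additive.zero[OF assms(1)] by (metis injD)
  have "grp_pullback E m {xs. (\<Sum>j<length fs. (fs ! j) (xs ! (idx ! j))) = 0}"
    using assms(3-5) by (intro grp_pullback_sum_eq_0) (auto simp: fs_def idx_def)
  then show ?case
  proof (rule grp_pullback_cong)
    fix xs :: "'y list"
    let ?s = "\<lambda>i. if i < m then xs ! i else p i"
    have "(\<Sum>j<length fs. (fs ! j) (xs ! (idx ! j))) =
        (\<Sum>j<length L. h ((\<lambda>(i, c). sc c (?s i)) (L ! j)))"
      by (rule sum.cong) (auto simp: fs_def idx_def split: prod.splits)
    also have "\<dots> = h (lf_eval sc ?s L)"
      by (simp add: lf_eval_def sum_list_sum_nth atLeast0LessThan additive.sum[OF assms(1)])
    finally show "xs \<in> {xs. (\<Sum>j<length fs. (fs ! j) (xs ! (idx ! j))) = 0} \<longleftrightarrow>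
        xs \<in> {xs. lf_sat sc (\<lambda>i. if i < m then xs ! i else p i) (LfZero L)}"
      by (simp add: h_eq_0)
  qed
next
  case (LfNeg \<psi>)
  then show ?case by (rule grp_pullback_cong[OF grp_pullback_Compl]) simp
next
  case (LfConj \<psi> \<chi>)
  then show ?case by (rule grp_pullback_cong[OF grp_pullback_Int]) simp
qed

theorem loc_trace_defines_grp_vs:
  fixes sc :: "'k::division_ring \<Rightarrow> 'y::ab_group_add \<Rightarrow> 'y" and h :: "'y \<Rightarrow> 'x::ab_group_add"
  assumes vs: "is_vector_space sc" and inf: "infinite (UNIV :: 'y set)"
    and "additive h" and "inj h"
  shows "loc_trace_defines gar (grp_struct TYPE('x)) var (vs_struct sc)"
proof (rule loc_trace_defines_grp_if_pullbacks)
  let ?E = "range (\<lambda>c x. h (sc c x)) \<union> range (\<lambda>b _. b)"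
  fix m D
  assume "definable var (vs_struct sc) m D"
  then obtain \<phi> p where "wf_fm var \<phi>" and D: "D = {xs. length xs = m \<and> set xs \<subseteq> fst (vs_struct sc) \<and>
      sat (vs_struct sc) (\<lambda>i. if i < m then xs ! i else p i) \<phi>}"
    unfolding definable_def by blast
  let ?S = "{xs. lf_sat sc (\<lambda>i. if i < m then xs ! i else p i) (lf_qf_of_fm \<phi>)}"
  have "grp_pullback ?E m ?S"
  proof (cases "m = 0")
    case True
    show ?thesis unfolding True by (rule grp_pullback_Nil)
  next
    case False
    then show ?thesis by (intro grp_pullback_lf_sat[OF assms(3,4)]) auto
  qed
  moreover have "D = {xs. length xs = m \<and> set xs \<subseteq> fst (vs_struct sc) \<and> xs \<in> ?S}"
    unfolding D using sat_vs_iff_lf_sat[OF vs inf \<open>wf_fm var \<phi>\<close>] by simp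
  ultimately show "\<exists>S. grp_pullback ?E m S \<and>
      D = {xs. length xs = m \<and> set xs \<subseteq> fst (vs_struct sc) \<and> xs \<in> S}"
    by blast
qed

fun vsym_of_gsym :: "gsym \<Rightarrow> 'e vsym" where
  "vsym_of_gsym GAdd = VAdd" | "vsym_of_gsym GNeg = VNeg" | "vsym_of_gsym GZero = VZero"

lemma eval_map_vsym_of_gsym:
  "eval_trm (vinterp sc) s (map_trm vsym_of_gsym t) = eval_trm ginterp s t"
proof (induction t)
  case (App f ts)
  then have args: "map (eval_trm (vinterp sc) s \<circ> map_trm vsym_of_gsym) ts = map (eval_trm ginterp s) ts"
    by simp
  show ?case by (cases f) (simp_all add: args)
qed simp

lemma var_vsym_of_gsym [simp]: "var (vsym_of_gsym f) = gar f"
  by (cases f) simp_all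

lemma wf_map_vsym_of_gsym: "wf_trm var (map_trm (vsym_of_gsym :: gsym \<Rightarrow> 'e vsym) t) = wf_trm gar t"
  by (induction t) (simp_all add: list_all_iff)

lemma definable_vs_if_definable_grp:
  assumes "definable gar (grp_struct TYPE('v::ab_group_add)) n Y"
  shows "definable var (vs_struct (sc :: 'e \<Rightarrow> 'v \<Rightarrow> 'v)) n Y"
proof -
  have sat: "sat (vs_struct sc) s (map_fm vsym_of_gsym \<phi>) = sat (grp_struct TYPE('v)) s \<phi>" for s \<phi>
    by (induction \<phi> arbitrary: s) (auto simp: vs_struct_def grp_struct_def eval_map_vsym_of_gsym)
  have wf: "wf_fm var (map_fm (vsym_of_gsym :: gsym \<Rightarrow> 'e vsym) \<phi>) = wf_fm gar \<phi>" for \<phi>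
    by (induction \<phi>) (auto simp: wf_map_vsym_of_gsym)
  obtain \<phi> p where "wf_fm gar \<phi>"
    and Y: "Y = {xs. length xs = n \<and> sat (grp_struct TYPE('v)) (\<lambda>i. if i < n then xs ! i else p i) \<phi>}"
    using assms unfolding definable_def by auto
  then show ?thesis
    unfolding definable_def
    by (intro exI[of _ "map_fm vsym_of_gsym \<phi>"] exI[of _ p]) (simp add: sat wf)
qed

lemma loc_trace_defines_expansion:
  assumes "fst N' = fst N" and "\<And>n Y. definable arN N n Y \<Longrightarrow> definable arN' N' n Y"
    and "loc_trace_defines arN N arM M"
  shows "loc_trace_defines arN' N' arM M"
proof -
  obtain E where E: "\<forall>f\<in>E. f ` fst M \<subseteq> fst N"
    and traces: "\<forall>m D. definable arM M m D \<longrightarrow>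
      (\<exists>fs idx Y. length idx = length fs \<and> set fs \<subseteq> E \<and> (\<forall>i\<in>set idx. i < m) \<and>
        definable arN N (length fs) Y \<and>
        D = {xs. length xs = m \<and> set xs \<subseteq> fst M \<and> map2 (\<lambda>f i. f (xs ! i)) fs idx \<in> Y})"
    using assms(3) unfolding loc_trace_defines_def by blast
  show ?thesis
    unfolding loc_trace_defines_def
  proof (intro exI[of _ E] conjI allI impI)
    show "\<forall>f\<in>E. f ` fst M \<subseteq> fst N'"
      using E assms(1) by simp
    fix m D
    assume "definable arM M m D"
    then obtain fs idx Y where fs: "length idx = length fs" "set fs \<subseteq> E" "\<forall>i\<in>set idx. i < m"
      and Y: "definable arN N (length fs) Y"
      and D: "D = {xs. length xs = m \<and> set xs \<subseteq> fst M \<and> map2 (\<lambda>f i. f (xs ! i)) fs idx \<in> Y}"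
      using traces by meson
    from assms(2)[OF Y] fs D
    show "\<exists>fs idx Y. length idx = length fs \<and> set fs \<subseteq> E \<and> (\<forall>i\<in>set idx. i < m) \<and>
        definable arN' N' (length fs) Y \<and>
        D = {xs. length xs = m \<and> set xs \<subseteq> fst M \<and> map2 (\<lambda>f i. f (xs ! i)) fs idx \<in> Y}"
      by blast
  qed
qed

lemma loc_trace_defines_refl: "loc_trace_defines ar M ar M"
  unfolding loc_trace_defines_def
proof (intro exI[of _ "{id}"] conjI allI impI)
  fix m D
  assume D: "definable ar M m D"
  have trace: "map2 (\<lambda>f i. f (xs ! i)) (replicate (length xs) id) [0..<length xs] = xs" for xs
    by (intro nth_equalityI) auto
  have dims: "length xs = m \<and> set xs \<subseteq> fst M" if "xs \<in> D" for xs
    using D that unfolding definable_def by auto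
  have "D = {xs. length xs = m \<and> set xs \<subseteq> fst M \<and> map2 (\<lambda>f i. f (xs ! i)) (replicate m id) [0..<m] \<in> D}"
  proof (intro set_eqI iffI)
    fix xs
    assume "xs \<in> D"
    then show "xs \<in> {xs. length xs = m \<and> set xs \<subseteq> fst M \<and>
        map2 (\<lambda>f i. f (xs ! i)) (replicate m id) [0..<m] \<in> D}"
      using dims[OF \<open>xs \<in> D\<close>] trace[of xs] by auto
  next
    fix xs
    assume "xs \<in> {xs. length xs = m \<and> set xs \<subseteq> fst M \<and>
        map2 (\<lambda>f i. f (xs ! i)) (replicate m id) [0..<m] \<in> D}"
    then show "xs \<in> D"
      using trace[of xs] by auto
  qed
  with D show "\<exists>fs idx Y. length idx = length fs \<and> set fs \<subseteq> {id} \<and> (\<forall>i\<in>set idx. i < m) \<and>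
      definable ar M (length fs) Y \<and>
      D = {xs. length xs = m \<and> set xs \<subseteq> fst M \<and> map2 (\<lambda>f i. f (xs ! i)) fs idx \<in> Y}"
    by (intro exI[of _ "replicate m id"] exI[of _ "[0..<m]"] exI[of _ D]) auto
qed auto

lemma elem_equiv_refl: "elem_equiv ar M M"
  by (simp add: elem_equiv_def)

lemma elem_equiv_trans: "elem_equiv ar A B \<Longrightarrow> elem_equiv ar B C \<Longrightarrow> elem_equiv ar A C"
  unfolding elem_equiv_def by (metis (no_types, lifting))

lemma is_struct_vs: "is_struct var (vs_struct sc)"
  by (simp add: is_struct_def vs_struct_def)

lemma is_struct_grp: "is_struct gar (grp_struct TYPE('v::ab_group_add))"
  by (simp add: is_struct_def grp_struct_def)

lemma th_loc_trace_defines_if_loc_trace_defines: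
  assumes "is_struct arN N" and "is_struct arM M" and "loc_trace_defines arN N arM M"
  shows "th_loc_trace_defines TYPE('b) TYPE('a) arN (N :: ('b, 'g) struct) arM (M :: ('a, 'f) struct)"
  unfolding th_loc_trace_defines_def
  using assms by (intro exI[of _ N] exI[of _ M]) (simp add: elem_equiv_refl)

theorem loc_trace_equiv_vs_grp:
  fixes sc :: "'k::division_ring \<Rightarrow> 'v::ab_group_add \<Rightarrow> 'v"
  assumes "is_vector_space sc"
  shows "loc_trace_equiv TYPE('v) TYPE('v) var (vs_struct sc) gar (grp_struct TYPE('v))"
proof -
  have "loc_trace_defines gar (grp_struct TYPE('v)) var (vs_struct sc)"
  proof (cases "finite (UNIV :: 'v set)")
    case True
    then show ?thesis by (rule loc_trace_defines_grp_finite)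
  next
    case False
    then show ?thesis
      using loc_trace_defines_grp_vs[OF assms False, of id] by (simp add: additive_def)
  qed
  moreover have "loc_trace_defines var (vs_struct sc) gar (grp_struct TYPE('v))"
    by (rule loc_trace_defines_expansion[OF _ definable_vs_if_definable_grp loc_trace_defines_refl])
       simp
  ultimately show ?thesis
    unfolding loc_trace_equiv_def
    by (simp add: th_loc_trace_defines_if_loc_trace_defines is_struct_vs is_struct_grp)
qed

section \<open>Transport of structures along injections\<close>

definition transport :: "('x \<Rightarrow> 'y) \<Rightarrow> ('x, 'f) struct \<Rightarrow> ('y, 'f) struct" where
  "transport h M = (range h, \<lambda>f ys. h (snd M f (map (inv h) ys)))"

lemma eval_transport:
  assumes "inj h"
  shows "eval_trm (snd (transport h M)) (\<lambda>n. h (s n)) t = h (eval_trm (snd M) s t)"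
proof (induction t)
  case (App f ts)
  let ?e = "eval_trm (snd (transport h M)) (\<lambda>n. h (s n))"
  have args: "map (inv h) (map ?e ts) = map (eval_trm (snd M) s) ts"
    using App.IH by (simp add: inv_f_f[OF assms])
  have "?e (App f ts) = h (snd M f (map (inv h) (map ?e ts)))"
    by (simp only: eval_trm.simps) (simp add: transport_def)
  then show ?case
    by (simp only: args eval_trm.simps)
qed simp

lemma sat_transport:
  assumes "inj h" and "fst M = UNIV"
  shows "sat (transport h M) (\<lambda>n. h (s n)) \<phi> \<longleftrightarrow> sat M s \<phi>"
proof (induction \<phi> arbitrary: s)
  case (FEq t u)
  then show ?case by (simp add: eval_transport[OF assms(1)] inj_eq[OF assms(1)])
next
  case (FEx n \<phi>)
  have upd: "(\<lambda>k. h (s k))(n := h b) = (\<lambda>k. h ((s(n := b)) k))" for b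
    by auto
  have "sat (transport h M) (\<lambda>k. h (s k)) (FEx n \<phi>) \<longleftrightarrow>
      (\<exists>b. sat (transport h M) ((\<lambda>k. h (s k))(n := h b)) \<phi>)"
    by (auto simp: transport_def)
  also have "\<dots> \<longleftrightarrow> (\<exists>b. sat M (s(n := b)) \<phi>)"
    by (simp only: upd FEx.IH)
  finally show ?case
    using assms(2) by simp
qed simp_all

lemma is_struct_transport: "is_struct ar (transport h M)"
  by (auto simp: is_struct_def transport_def)

lemma elem_equiv_transport:
  assumes "inj h" and "fst M = UNIV"
  shows "elem_equiv ar M (transport h M)"
  unfolding elem_equiv_def
proof (intro allI impI iffI)
  fix \<phi>
  assume "\<exists>s. range s \<subseteq> fst M \<and> sat M s \<phi>"
  then obtain s where "sat M s \<phi>" by blast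
  then show "\<exists>s. range s \<subseteq> fst (transport h M) \<and> sat (transport h M) s \<phi>"
    using sat_transport[OF assms] by (intro exI[of _ "\<lambda>n. h (s n)"]) (auto simp: transport_def)
next
  fix \<phi>
  assume "\<exists>s. range s \<subseteq> fst (transport h M) \<and> sat (transport h M) s \<phi>"
  then obtain s where "range s \<subseteq> range h" and "sat (transport h M) s \<phi>"
    by (auto simp: transport_def)
  moreover from \<open>range s \<subseteq> range h\<close> have "(\<lambda>n. h (inv h (s n))) = s"
    by (intro ext) (simp add: f_inv_into_f range_subsetD)
  ultimately have "sat M (\<lambda>n. inv h (s n)) \<phi>"
    by (simp flip: sat_transport[OF assms])
  then show "\<exists>s. range s \<subseteq> fst M \<and> sat M s \<phi>"
    using assms(2) by blast
qed

lemma sat_transport_tuple: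
  assumes "inj h" and "fst M = UNIV" and "length ys = m"
  shows "sat (transport h M) (\<lambda>i. if i < m then map h ys ! i else h (p i)) \<phi> \<longleftrightarrow>
    sat M (\<lambda>i. if i < m then ys ! i else p i) \<phi>"
proof -
  have "(\<lambda>i. if i < m then map h ys ! i else h (p i)) = (\<lambda>i. h (if i < m then ys ! i else p i))"
    using assms(3) by auto
  then show ?thesis
    by (simp only: sat_transport[OF assms(1,2)])
qed

lemma image_map_sat_transport:
  assumes "inj h" and "fst M = UNIV"
  shows "map h ` {ys. length ys = m \<and> set ys \<subseteq> fst M \<and> sat M (\<lambda>i. if i < m then ys ! i else p i) \<phi>} =
    {xs. length xs = m \<and> set xs \<subseteq> fst (transport h M) \<and>
      sat (transport h M) (\<lambda>i. if i < m then xs ! i else h (p i)) \<phi>}"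
proof (intro set_eqI iffI)
  fix xs
  assume "xs \<in> map h ` {ys. length ys = m \<and> set ys \<subseteq> fst M \<and>
      sat M (\<lambda>i. if i < m then ys ! i else p i) \<phi>}"
  then obtain ys where "xs = map h ys" and "length ys = m"
    and "sat M (\<lambda>i. if i < m then ys ! i else p i) \<phi>"
    by blast
  then show "xs \<in> {xs. length xs = m \<and> set xs \<subseteq> fst (transport h M) \<and>
      sat (transport h M) (\<lambda>i. if i < m then xs ! i else h (p i)) \<phi>}"
    using sat_transport_tuple[OF assms] by (auto simp: transport_def)
next
  fix xs
  assume xs: "xs \<in> {xs. length xs = m \<and> set xs \<subseteq> fst (transport h M) \<and>
      sat (transport h M) (\<lambda>i. if i < m then xs ! i else h (p i)) \<phi>}"
  then have xs_eq: "map h (map (inv h) xs) = xs"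
    by (simp add: map_idI f_inv_into_f subset_iff transport_def)
  from xs have "length (map (inv h) xs) = m"
    and "sat (transport h M) (\<lambda>i. if i < m then xs ! i else h (p i)) \<phi>"
    by auto
  then have "sat M (\<lambda>i. if i < m then map (inv h) xs ! i else p i) \<phi>"
    using sat_transport_tuple[OF assms, of "map (inv h) xs" m p \<phi>] unfolding xs_eq by blast
  with xs_eq show "xs \<in> map h ` {ys. length ys = m \<and> set ys \<subseteq> fst M \<and>
      sat M (\<lambda>i. if i < m then ys ! i else p i) \<phi>}"
    using xs assms(2) by (intro image_eqI[where f = "map h", OF xs_eq[symmetric]]) auto
qed

lemma definable_transport_iff:
  assumes "inj h" and "fst M = UNIV"
  shows "definable ar (transport h M) m D' \<longleftrightarrow> (\<exists>D. definable ar M m D \<and> D' = map h ` D)"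
proof
  assume "definable ar (transport h M) m D'"
  then obtain \<phi> p where "wf_fm ar \<phi>" and "range p \<subseteq> range h"
    and D': "D' = {xs. length xs = m \<and> set xs \<subseteq> fst (transport h M) \<and>
      sat (transport h M) (\<lambda>i. if i < m then xs ! i else p i) \<phi>}"
    unfolding definable_def by (auto simp: transport_def)
  moreover from \<open>range p \<subseteq> range h\<close> have "(\<lambda>i. if i < m then xs ! i else h (inv h (p i))) =
      (\<lambda>i. if i < m then xs ! i else p i)" for xs
    by (intro ext) (simp add: f_inv_into_f range_subsetD)
  ultimately have "D' = map h ` {ys. length ys = m \<and> set ys \<subseteq> fst M \<and>
      sat M (\<lambda>i. if i < m then ys ! i else inv h (p i)) \<phi>}"
    using image_map_sat_transport[OF assms, of m "\<lambda>n. inv h (p n)" \<phi>] by (simp only:)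
  moreover have "definable ar M m {ys. length ys = m \<and> set ys \<subseteq> fst M \<and>
      sat M (\<lambda>i. if i < m then ys ! i else inv h (p i)) \<phi>}"
    unfolding definable_def using \<open>wf_fm ar \<phi>\<close> assms(2)
    by (intro exI[of _ \<phi>] exI[of _ "\<lambda>n. inv h (p n)"]) simp
  ultimately show "\<exists>D. definable ar M m D \<and> D' = map h ` D"
    by blast
next
  assume "\<exists>D. definable ar M m D \<and> D' = map h ` D"
  then obtain D where "definable ar M m D" and "D' = map h ` D"
    by blast
  then obtain \<phi> p where "wf_fm ar \<phi>" and D': "D' = map h ` {ys. length ys = m \<and> set ys \<subseteq> fst M \<and>
      sat M (\<lambda>i. if i < m then ys ! i else p i) \<phi>}"
    unfolding definable_def by blast
  then show "definable ar (transport h M) m D'"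
    unfolding definable_def D' image_map_sat_transport[OF assms]
    by (intro exI[of _ \<phi>] exI[of _ "\<lambda>n. h (p n)"]) (auto simp: transport_def)
qed

lemma image_map_trace_transport:
  assumes "inj hN" and "inj hM" and "fst M = UNIV"
    and "length idx = length fs" and "\<forall>i\<in>set idx. i < m"
  shows "map hM ` {xs. length xs = m \<and> set xs \<subseteq> fst M \<and> map2 (\<lambda>f i. f (xs ! i)) fs idx \<in> Y} =
    {xs. length xs = m \<and> set xs \<subseteq> fst (transport hM M) \<and>
      map2 (\<lambda>f i. f (xs ! i)) (map (\<lambda>f. hN \<circ> f \<circ> inv hM) fs) idx \<in> map hN ` Y}"
    (is "map hM ` ?D = ?D'")
proof (intro set_eqI)
  fix xs
  let ?fs = "map (\<lambda>f. hN \<circ> f \<circ> inv hM) fs"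
  show "xs \<in> map hM ` ?D \<longleftrightarrow> xs \<in> ?D'"
  proof (cases "set xs \<subseteq> range hM")
    case True
    then have xs: "map hM (map (inv hM) xs) = xs"
      by (simp add: map_idI f_inv_into_f subset_iff)
    have "xs \<in> map hM ` ?D \<longleftrightarrow> map (inv hM) xs \<in> ?D"
      by (subst (1) xs[symmetric]) (rule inj_image_mem_iff[OF inj_mapI[OF assms(2)]])
    also have "\<dots> \<longleftrightarrow> length xs = m \<and> map2 (\<lambda>f i. f (map (inv hM) xs ! i)) fs idx \<in> Y"
      using assms(3) by simp
    also have "\<dots> \<longleftrightarrow> length xs = m \<and> map2 (\<lambda>f i. f (xs ! i)) ?fs idx \<in> map hN ` Y"
    proof (cases "length xs = m")
      case True
      then have eq: "map2 (\<lambda>f i. f (xs ! i)) ?fs idx =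
          map hN (map2 (\<lambda>f i. f (map (inv hM) xs ! i)) fs idx)"
        using assms(4,5) by (intro nth_equalityI) (auto simp: inv_f_f[OF assms(2)])
      show ?thesis
        by (simp only: eq True inj_image_mem_iff[OF inj_mapI[OF assms(1)]] simp_thms)
    qed simp
    finally show ?thesis
      using True by (simp add: transport_def)
  next
    case False
    then show ?thesis
      by (auto simp: transport_def)
  qed
qed

lemma loc_trace_defines_transport:
  fixes hN :: "'x \<Rightarrow> 'y" and hM :: "'a \<Rightarrow> 'b"
  assumes "inj hN" and "inj hM" and "fst N = UNIV" and "fst M = UNIV"
    and "loc_trace_defines arN N arM M"
  shows "loc_trace_defines arN (transport hN N) arM (transport hM M)"
proof -
  obtain E where traces: "\<forall>m D. definable arM M m D \<longrightarrow>
      (\<exists>fs idx Y. length idx = length fs \<and> set fs \<subseteq> E \<and> (\<forall>i\<in>set idx. i < m) \<and>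
        definable arN N (length fs) Y \<and>
        D = {xs. length xs = m \<and> set xs \<subseteq> fst M \<and> map2 (\<lambda>f i. f (xs ! i)) fs idx \<in> Y})"
    using assms(5) unfolding loc_trace_defines_def by blast
  show ?thesis
    unfolding loc_trace_defines_def
  proof (intro exI[of _ "(\<lambda>f. hN \<circ> f \<circ> inv hM) ` E"] conjI allI impI ballI)
    fix m D'
    assume "definable arM (transport hM M) m D'"
    then obtain D where "definable arM M m D" and D': "D' = map hM ` D"
      unfolding definable_transport_iff[OF assms(2,4)] by blast
    from traces[rule_format, OF this(1)] obtain fs idx Y
      where fs: "length idx = length fs" "set fs \<subseteq> E" "\<forall>i\<in>set idx. i < m"
        and Y: "definable arN N (length fs) Y"
        and D: "D = {xs. length xs = m \<and> set xs \<subseteq> fst M \<and> map2 (\<lambda>f i. f (xs ! i)) fs idx \<in> Y}"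
      by blast
    let ?fs = "map (\<lambda>f. hN \<circ> f \<circ> inv hM) fs"
    have "D' = {xs. length xs = m \<and> set xs \<subseteq> fst (transport hM M) \<and>
        map2 (\<lambda>f i. f (xs ! i)) ?fs idx \<in> map hN ` Y}"
      unfolding D' D by (rule image_map_trace_transport[OF assms(1,2,4) fs(1,3)])
    moreover have "definable arN (transport hN N) (length ?fs) (map hN ` Y)"
      using Y definable_transport_iff[OF assms(1,3)] by auto
    ultimately show "\<exists>fs idx Y. length idx = length fs \<and> set fs \<subseteq> (\<lambda>f. hN \<circ> f \<circ> inv hM) ` E \<and>
        (\<forall>i\<in>set idx. i < m) \<and> definable arN (transport hN N) (length fs) Y \<and>
        D' = {xs. length xs = m \<and> set xs \<subseteq> fst (transport hM M) \<and> map2 (\<lambda>f i. f (xs ! i)) fs idx \<in> Y}"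
      using fs by (intro exI[of _ ?fs] exI[of _ idx] exI[of _ "map hN ` Y"]) auto
  qed (auto simp: transport_def)
qed

section \<open>Prime fields\<close>

definition of_frac :: "int \<times> int \<Rightarrow> 'a::division_ring" where
  "of_frac u = of_int (fst u) * inverse (of_int (snd u))"

text \<open>A denominator divisible by the characteristic \<open>p\<close> makes a fraction \<open>0\<close>
  (as \<open>inverse 0 = 0\<close>), so such a summand is dropped.\<close>

definition frac_add :: "int \<Rightarrow> int \<times> int \<Rightarrow> int \<times> int \<Rightarrow> int \<times> int" where
  "frac_add p u v = (if p dvd snd u then v else if p dvd snd v then u
     else (fst u * snd v + fst v * snd u, snd u * snd v))"

lemma of_frac_eq_0_iff:
  "(of_frac u :: 'a::division_ring) = 0 \<longleftrightarrow> int CHAR('a) dvd fst u \<or> int CHAR('a) dvd snd u"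
  by (simp add: of_frac_def of_int_eq_0_iff_char_dvd)

lemma of_frac_add:
  "(of_frac (frac_add (int CHAR('a)) u v) :: 'a::division_ring) = of_frac u + of_frac v"
proof -
  obtain a b c d where u: "u = (a, b)" and v: "v = (c, d)"
    by force
  let ?A = "of_int a :: 'a" and ?B = "of_int b :: 'a" and ?C = "of_int c :: 'a" and ?D = "of_int d :: 'a"
  show ?thesis
  proof (cases "?B = 0 \<or> ?D = 0")
    case True
    then show ?thesis
      by (auto simp: frac_add_def of_frac_def u v simp flip: of_int_eq_0_iff_char_dvd)
  next
    case False
    then have "of_frac (frac_add (int CHAR('a)) u v) = (?A * ?D + ?C * ?B) * (inverse ?D * inverse ?B)"
      by (simp add: frac_add_def of_frac_def u v nonzero_inverse_mult_distrib
          flip: of_int_eq_0_iff_char_dvd)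
    also have "\<dots> = ?A * (?D * inverse ?D) * inverse ?B + ?C * (?B * inverse ?D) * inverse ?B"
      by (simp only: distrib_right mult.assoc)
    also have "?B * inverse ?D = inverse ?D * ?B"
      by (simp add: mult_inverse_of_int_commute)
    also have "?A * (?D * inverse ?D) * inverse ?B + ?C * (inverse ?D * ?B) * inverse ?B =
        ?A * inverse ?B + ?C * inverse ?D"
      using False by (simp add: mult.assoc)
    finally show ?thesis
      by (simp add: of_frac_def u v)
  qed
qed

lemma of_frac_uminus: "(of_frac (- a, b) :: 'a::division_ring) = - of_frac (a, b)"
  by (simp add: of_frac_def)

lemma of_frac_mult: "(of_frac (a * c, b * d) :: 'a::division_ring) = of_frac (a, b) * of_frac (c, d)"
proof -
  let ?A = "of_int a :: 'a" and ?B = "of_int b :: 'a" and ?C = "of_int c :: 'a" and ?D = "of_int d :: 'a"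
  have "inverse (?B * ?D) = inverse ?B * inverse ?D"
    by (cases "?B = 0 \<or> ?D = 0")
       (auto simp: nonzero_inverse_mult_distrib mult_of_int_commute[of b])
  then have "of_frac (a * c, b * d) = ?A * (?C * inverse ?B) * inverse ?D"
    by (simp add: of_frac_def mult.assoc)
  also have "?C * inverse ?B = inverse ?B * ?C"
    by (simp add: mult_inverse_of_int_commute)
  finally show ?thesis
    by (simp add: of_frac_def mult.assoc)
qed

lemma of_frac_inverse: "inverse (of_frac (a, b) :: 'a::division_ring) = of_frac (b, a)"
  by (cases "(of_int a :: 'a) = 0 \<or> (of_int b :: 'a) = 0")
     (auto simp: of_frac_def nonzero_inverse_mult_distrib)

lemma of_frac_eq_iff:
  "(of_frac u :: 'a::division_ring) = of_frac v \<longleftrightarrow>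
    (of_frac (frac_add (int CHAR('a)) u (- fst v, snd v)) :: 'a) = 0"
  by (cases v) (simp add: of_frac_add of_frac_uminus)

lemma of_frac_eq_iff_same_char:
  assumes "CHAR('k::division_ring) = CHAR('l::division_ring)"
  shows "(of_frac u :: 'k) = of_frac v \<longleftrightarrow> (of_frac u :: 'l) = of_frac v"
  unfolding of_frac_eq_iff of_frac_eq_0_iff using assms by simp

definition prime_field :: "'a::division_ring set" where
  "prime_field = range of_frac"

lemma prime_field_add:
  assumes "x \<in> prime_field" and "y \<in> prime_field"
  shows "x + y \<in> prime_field"
proof -
  obtain u v where "x = of_frac u" and "y = of_frac v"
    using assms unfolding prime_field_def by blast
  then show ?thesis
    unfolding prime_field_def by (simp flip: of_frac_add)
qed

lemma prime_field_uminus: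
  assumes "x \<in> prime_field"
  shows "- x \<in> prime_field"
proof -
  obtain u where "x = of_frac u"
    using assms unfolding prime_field_def by blast
  then show ?thesis
    unfolding prime_field_def by (cases u) (simp flip: of_frac_uminus)
qed

lemma prime_field_diff: "x \<in> prime_field \<Longrightarrow> y \<in> prime_field \<Longrightarrow> x - y \<in> prime_field"
  unfolding diff_conv_add_uminus by (intro prime_field_add prime_field_uminus)

lemma prime_field_mult:
  assumes "x \<in> prime_field" and "y \<in> prime_field"
  shows "x * y \<in> prime_field"
proof -
  obtain u v where "x = of_frac u" and "y = of_frac v"
    using assms unfolding prime_field_def by blast
  then show ?thesis
    unfolding prime_field_def by (cases u, cases v) (simp flip: of_frac_mult)
qed

lemma prime_field_inverse:
  assumes "x \<in> prime_field"
  shows "inverse x \<in> prime_field"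
proof -
  obtain u where "x = of_frac u"
    using assms unfolding prime_field_def by blast
  then show ?thesis
    unfolding prime_field_def by (cases u) (simp add: of_frac_inverse)
qed

lemma prime_field_0_1: "0 \<in> prime_field" "1 \<in> prime_field"
  unfolding prime_field_def by (rule range_eqI[of _ _ "(0, 1)"] range_eqI[of _ _ "(1, 1)"];
    simp add: of_frac_def)+

definition prime_field_iso :: "'l::division_ring \<Rightarrow> 'k::division_ring" where
  "prime_field_iso x = of_frac (SOME u. x = of_frac u)"

lemma prime_field_iso_of_frac:
  assumes "CHAR('k::division_ring) = CHAR('l::division_ring)"
  shows "(prime_field_iso (of_frac u :: 'l) :: 'k) = of_frac u"
proof -
  have "(of_frac u :: 'l) = of_frac (SOME v. (of_frac u :: 'l) = of_frac v)"
    by (rule someI) (rule refl)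
  then show ?thesis
    using of_frac_eq_iff_same_char[OF assms] by (simp add: prime_field_iso_def)
qed

lemma prime_field_iso_add:
  assumes "CHAR('k::division_ring) = CHAR('l::division_ring)"
    and "x \<in> prime_field" and "y \<in> prime_field"
  shows "(prime_field_iso (x + y :: 'l) :: 'k) = prime_field_iso x + prime_field_iso y"
proof -
  obtain u v where "x = of_frac u" and "y = of_frac v"
    using assms(2,3) unfolding prime_field_def by blast
  then show ?thesis
    using of_frac_add[of u v, where 'a = 'l, symmetric] of_frac_add[of u v, where 'a = 'k] assms(1)
    by (simp add: prime_field_iso_of_frac[OF assms(1)])
qed

lemma prime_field_iso_eq_iff:
  assumes "CHAR('k::division_ring) = CHAR('l::division_ring)"
    and "x \<in> prime_field" and "y \<in> prime_field"
  shows "(prime_field_iso (x :: 'l) :: 'k) = prime_field_iso y \<longleftrightarrow> x = y"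
proof -
  obtain u v where "x = of_frac u" and "y = of_frac v"
    using assms(2,3) unfolding prime_field_def by blast
  then show ?thesis
    by (simp add: prime_field_iso_of_frac[OF assms(1)] of_frac_eq_iff_same_char[OF assms(1)])
qed

lemma prime_field_iso_0:
  assumes "CHAR('k::division_ring) = CHAR('l::division_ring)"
  shows "(prime_field_iso (0 :: 'l) :: 'k) = 0"
  using prime_field_iso_of_frac[OF assms, of "(0, 1)"] by (simp add: of_frac_def)

section \<open>Additive embedding into a free vector space\<close>

text \<open>Values are supported in the domain, so a vector outside the domain has coefficient \<open>0\<close> in
  every value; this keeps one-step extensions injective.\<close>

definition partial_embedding ::
  "('l::division_ring \<Rightarrow> 'w::ab_group_add \<Rightarrow> 'w) \<Rightarrow> ('w \<times> ('w \<Rightarrow>\<^sub>0 'k::division_ring)) set \<Rightarrow> bool" where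
  "partial_embedding sc G \<longleftrightarrow> (0, 0) \<in> G \<and> single_valued G \<and> single_valued (G\<inverse>) \<and>
     (\<forall>x a y b. (x, a) \<in> G \<longrightarrow> (y, b) \<in> G \<longrightarrow> (x + y, a + b) \<in> G) \<and>
     (\<forall>x c. x \<in> Domain G \<longrightarrow> c \<in> prime_field \<longrightarrow> sc c x \<in> Domain G) \<and>
     (\<forall>a\<in>Range G. Poly_Mapping.keys a \<subseteq> Domain G)"

lemma chain_subset_Union_pair:
  assumes "chain\<^sub>\<subseteq> C" and "p \<in> \<Union>C" and "q \<in> \<Union>C"
  shows "\<exists>G\<in>C. p \<in> G \<and> q \<in> G"
  using assms unfolding chain_subset_def by blast

lemma single_valued_Union_chain:
  assumes "chain\<^sub>\<subseteq> C" and "\<And>G. G \<in> C \<Longrightarrow> single_valued G"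
  shows "single_valued (\<Union>C)"
proof (rule single_valuedI)
  fix x y z
  assume "(x, y) \<in> \<Union>C" and "(x, z) \<in> \<Union>C"
  with chain_subset_Union_pair[OF assms(1)] obtain G where "G \<in> C" "(x, y) \<in> G" "(x, z) \<in> G"
    by blast
  then show "y = z"
    using single_valuedD[OF assms(2)] by blast
qed

lemma partial_embedding_D:
  assumes "partial_embedding sc G"
  shows "(0, 0) \<in> G" "single_valued G" "single_valued (G\<inverse>)"
    "\<And>x a y b. (x, a) \<in> G \<Longrightarrow> (y, b) \<in> G \<Longrightarrow> (x + y, a + b) \<in> G"
    "\<And>x c. x \<in> Domain G \<Longrightarrow> c \<in> prime_field \<Longrightarrow> sc c x \<in> Domain G"
    "\<And>a. a \<in> Range G \<Longrightarrow> Poly_Mapping.keys a \<subseteq> Domain G"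
  using assms unfolding partial_embedding_def by blast+

lemma partial_embedding_I:
  assumes "(0, 0) \<in> G" "single_valued G" "single_valued (G\<inverse>)"
    "\<And>x a y b. (x, a) \<in> G \<Longrightarrow> (y, b) \<in> G \<Longrightarrow> (x + y, a + b) \<in> G"
    "\<And>x c. x \<in> Domain G \<Longrightarrow> c \<in> prime_field \<Longrightarrow> sc c x \<in> Domain G"
    "\<And>a. a \<in> Range G \<Longrightarrow> Poly_Mapping.keys a \<subseteq> Domain G"
  shows "partial_embedding sc G"
  using assms unfolding partial_embedding_def by blast

lemma partial_embedding_Union:
  fixes sc :: "'l::division_ring \<Rightarrow> 'w::ab_group_add \<Rightarrow> 'w"
    and C :: "('w \<times> ('w \<Rightarrow>\<^sub>0 'k::division_ring)) set set"
  assumes C: "C \<in> chains {G. partial_embedding sc G}" and "C \<noteq> {}"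
  shows "partial_embedding sc (\<Union>C)"
proof -
  note emb = partial_embedding_D[OF chainsD2[OF C, THEN subsetD, simplified]]
  have chain: "chain\<^sub>\<subseteq> C"
    using C by (simp add: chains_def)
  show ?thesis
  proof (rule partial_embedding_I)
    show "(0, 0) \<in> \<Union>C"
      using \<open>C \<noteq> {}\<close> emb(1) by blast
    show "single_valued (\<Union>C)"
      using chain emb(2) by (rule single_valued_Union_chain)
    have "chain\<^sub>\<subseteq> (converse ` C)"
      using chain by (auto simp: chain_subset_def)
    then have "single_valued (\<Union>(converse ` C))"
      by (rule single_valued_Union_chain) (auto intro: emb(3))
    moreover have "(\<Union>C)\<inverse> = \<Union>(converse ` C)"
      by blast
    ultimately show "single_valued ((\<Union>C)\<inverse>)"
      by simp
    fix x a y b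
    assume "(x, a) \<in> \<Union>C" and "(y, b) \<in> \<Union>C"
    with chain_subset_Union_pair[OF chain] obtain G where "G \<in> C" "(x, a) \<in> G" "(y, b) \<in> G"
      by blast
    then show "(x + y, a + b) \<in> \<Union>C"
      using emb(4) by blast
  next
    fix x and c :: 'l
    assume "x \<in> Domain (\<Union>C)" and "c \<in> prime_field"
    then show "sc c x \<in> Domain (\<Union>C)"
      using emb(5) by blast
  next
    fix a
    assume "a \<in> Range (\<Union>C)"
    then show "Poly_Mapping.keys a \<subseteq> Domain (\<Union>C)"
      using emb(6) by blast
  qed
qed

lemma partial_embedding_coeff_unique:
  fixes sc :: "'l::division_ring \<Rightarrow> 'w::ab_group_add \<Rightarrow> 'w"
    and G :: "('w \<times> ('w \<Rightarrow>\<^sub>0 'k::division_ring)) set"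
  assumes vs: "is_vector_space sc" and G: "partial_embedding sc G" and w: "w \<notin> Domain G"
    and x: "x \<in> Domain G" and y: "y \<in> Domain G" and c: "c \<in> prime_field" and d: "d \<in> prime_field"
    and eq: "x + sc c w = y + sc d w"
  shows "c = d"
proof (rule ccontr)
  assume "c \<noteq> d"
  note laws = vector_space_laws[OF vs]
  have inv: "inverse (c - d) \<in> prime_field"
    using prime_field_inverse[OF prime_field_diff[OF c d]] .
  have "- 1 \<in> prime_field"
    using prime_field_uminus[OF prime_field_0_1(2)] .
  then have "sc (- 1) x \<in> Domain G"
    by (rule partial_embedding_D(5)[OF G x])
  then have "- x \<in> Domain G"
    by (simp add: laws(4,7))
  then obtain a b where "(- x, a) \<in> G" and "(y, b) \<in> G"
    using y by blast
  then have "(y + - x, b + a) \<in> G"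
    using partial_embedding_D(4)[OF G] by blast
  then have "y - x \<in> Domain G"
    unfolding diff_conv_add_uminus by (rule DomainI)
  moreover have "sc (c - d) w = y - x"
  proof -
    have "sc (c - d) w = sc c w - sc d w"
      using laws(2)[of c "- d" w] by (simp add: laws(7))
    also have "\<dots> = y - x"
      using eq by (simp add: algebra_simps)
    finally show ?thesis .
  qed
  ultimately have "sc (inverse (c - d)) (sc (c - d) w) \<in> Domain G"
    using partial_embedding_D(5)[OF G _ inv] by simp
  then show False
    using w \<open>c \<noteq> d\<close> by (simp add: laws(4) flip: laws(3))
qed

definition extend_embedding ::
  "('l::division_ring \<Rightarrow> 'w::ab_group_add \<Rightarrow> 'w) \<Rightarrow> 'w \<Rightarrow> ('w \<times> ('w \<Rightarrow>\<^sub>0 'k::division_ring)) set \<Rightarrow>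
    ('w \<times> ('w \<Rightarrow>\<^sub>0 'k)) set" where
  "extend_embedding sc w G = {(x + sc c w, a + Poly_Mapping.single w (prime_field_iso c)) | x a c.
     (x, a) \<in> G \<and> c \<in> prime_field}"

lemma extend_embeddingI:
  "(x, a) \<in> G \<Longrightarrow> c \<in> prime_field \<Longrightarrow>
    (x + sc c w, a + Poly_Mapping.single w (prime_field_iso c)) \<in> extend_embedding sc w G"
  unfolding extend_embedding_def by blast

lemma extend_embeddingE:
  assumes "(z, e) \<in> extend_embedding sc w G"
  obtains x a c where "(x, a) \<in> G" "c \<in> prime_field" "z = x + sc c w"
    "e = a + Poly_Mapping.single w (prime_field_iso c)"
  using assms unfolding extend_embedding_def by blast

context
  fixes sc :: "'l::division_ring \<Rightarrow> 'w::ab_group_add \<Rightarrow> 'w" and w :: 'w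
    and G :: "('w \<times> ('w \<Rightarrow>\<^sub>0 'k::division_ring)) set"
  assumes vs: "is_vector_space sc" and same_char: "CHAR('k) = CHAR('l)"
    and G: "partial_embedding sc G" and w: "w \<notin> Domain G"
begin

lemma subset_extend_embedding: "G \<subseteq> extend_embedding sc w G"
proof
  fix p
  assume "p \<in> G"
  then obtain x a where "p = (x, a)" and "(x, a) \<in> G"
    by (cases p) blast
  then show "p \<in> extend_embedding sc w G"
    using extend_embeddingI[OF \<open>(x, a) \<in> G\<close> prime_field_0_1(1), of sc w]
    by (simp add: vector_space_laws(5)[OF vs] prime_field_iso_0[OF same_char])
qed

lemma in_Domain_extend_embedding: "w \<in> Domain (extend_embedding sc w G)"
  using extend_embeddingI[OF partial_embedding_D(1)[OF G] prime_field_0_1(2), of sc w]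
  by (auto simp: vector_space_laws(4)[OF vs])

lemma lookup_eq_0_if_in_embedding: "(x, a) \<in> G \<Longrightarrow> Poly_Mapping.lookup a w = 0"
  using partial_embedding_D(6)[OF G] w by (auto simp flip: not_in_keys_iff_lookup_eq_zero)

lemma single_valued_extend_embedding: "single_valued (extend_embedding sc w G)"
proof (rule single_valuedI)
  fix z e1 e2
  assume "(z, e1) \<in> extend_embedding sc w G" and "(z, e2) \<in> extend_embedding sc w G"
  then obtain x a c y b d where xa: "(x, a) \<in> G" "c \<in> prime_field" "z = x + sc c w"
      "e1 = a + Poly_Mapping.single w (prime_field_iso c)"
    and yb: "(y, b) \<in> G" "d \<in> prime_field" "z = y + sc d w"
      "e2 = b + Poly_Mapping.single w (prime_field_iso d)"
    by (metis extend_embeddingE)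
  then have "c = d"
    by (intro partial_embedding_coeff_unique[OF vs G w, of x y c d]) auto
  with xa yb have "x = y"
    by simp
  with xa yb have "a = b"
    using partial_embedding_D(2)[OF G] single_valuedD by metis
  with xa yb \<open>c = d\<close> show "e1 = e2"
    by simp
qed

lemma single_valued_converse_extend_embedding: "single_valued ((extend_embedding sc w G)\<inverse>)"
proof (rule single_valuedI)
  fix e z1 z2
  assume "(e, z1) \<in> (extend_embedding sc w G)\<inverse>" and "(e, z2) \<in> (extend_embedding sc w G)\<inverse>"
  then obtain x a c y b d where xa: "(x, a) \<in> G" "c \<in> prime_field" "z1 = x + sc c w"
      "e = a + Poly_Mapping.single w (prime_field_iso c)"
    and yb: "(y, b) \<in> G" "d \<in> prime_field" "z2 = y + sc d w"
      "e = b + Poly_Mapping.single w (prime_field_iso d)"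
    by (metis converse_iff extend_embeddingE)
  have "Poly_Mapping.lookup e w = prime_field_iso c"
    using xa(4) lookup_eq_0_if_in_embedding[OF xa(1)] by (simp add: lookup_add)
  moreover have "Poly_Mapping.lookup e w = prime_field_iso d"
    using yb(4) lookup_eq_0_if_in_embedding[OF yb(1)] by (simp add: lookup_add)
  ultimately have "c = d"
    using prime_field_iso_eq_iff[OF same_char xa(2) yb(2)] by simp
  with xa yb have "a = b"
    by simp
  with xa yb have "x = y"
    using partial_embedding_D(3)[OF G] single_valuedD by (metis converse_iff)
  with xa yb \<open>c = d\<close> show "z1 = z2"
    by simp
qed

lemma add_mem_extend_embedding:
  assumes "(z1, e1) \<in> extend_embedding sc w G" and "(z2, e2) \<in> extend_embedding sc w G"
  shows "(z1 + z2, e1 + e2) \<in> extend_embedding sc w G"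
proof -
  obtain x a c y b d where xa: "(x, a) \<in> G" "c \<in> prime_field" "z1 = x + sc c w"
      "e1 = a + Poly_Mapping.single w (prime_field_iso c)"
    and yb: "(y, b) \<in> G" "d \<in> prime_field" "z2 = y + sc d w"
      "e2 = b + Poly_Mapping.single w (prime_field_iso d)"
    using assms by (metis extend_embeddingE)
  have "(x + y + sc (c + d) w, a + b + Poly_Mapping.single w (prime_field_iso (c + d)))
      \<in> extend_embedding sc w G"
    using partial_embedding_D(4)[OF G xa(1) yb(1)] prime_field_add[OF xa(2) yb(2)]
    by (rule extend_embeddingI)
  then show ?thesis
    using xa yb prime_field_iso_add[OF same_char xa(2) yb(2)]
    by (simp add: vector_space_laws(2)[OF vs] single_add algebra_simps)
qed

lemma scale_mem_Domain_extend_embedding: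
  assumes "z \<in> Domain (extend_embedding sc w G)" and t: "t \<in> prime_field"
  shows "sc t z \<in> Domain (extend_embedding sc w G)"
proof -
  obtain x a c where "(x, a) \<in> G" "c \<in> prime_field" "z = x + sc c w"
    using assms(1) by (metis DomainE extend_embeddingE)
  moreover obtain a' where "(sc t x, a') \<in> G"
    using partial_embedding_D(5)[OF G _ t] \<open>(x, a) \<in> G\<close> by blast
  ultimately have "(sc t x + sc (t * c) w, a' + Poly_Mapping.single w (prime_field_iso (t * c)))
      \<in> extend_embedding sc w G"
    using prime_field_mult[OF t] extend_embeddingI by blast
  then show ?thesis
    using \<open>z = x + sc c w\<close> by (auto simp: vector_space_laws[OF vs])
qed

lemma keys_subset_Domain_extend_embedding:
  assumes "e \<in> Range (extend_embedding sc w G)"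
  shows "Poly_Mapping.keys e \<subseteq> Domain (extend_embedding sc w G)"
proof -
  obtain z where "(z, e) \<in> extend_embedding sc w G"
    using assms by blast
  then obtain x a c where "(x, a) \<in> G" "c \<in> prime_field" "z = x + sc c w"
    and e: "e = a + Poly_Mapping.single w (prime_field_iso c)"
    by (rule extend_embeddingE)
  have "Poly_Mapping.keys e \<subseteq>
      Poly_Mapping.keys a \<union> Poly_Mapping.keys (Poly_Mapping.single w (prime_field_iso c :: 'k))"
    unfolding e by (rule keys_add)
  also have "\<dots> \<subseteq> Domain G \<union> {w}"
    using partial_embedding_D(6)[OF G] \<open>(x, a) \<in> G\<close> by auto
  also have "\<dots> \<subseteq> Domain (extend_embedding sc w G)"
    using Domain_mono[OF subset_extend_embedding] in_Domain_extend_embedding by blast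
  finally show ?thesis .
qed

lemma partial_embedding_extend_embedding: "partial_embedding sc (extend_embedding sc w G)"
proof (rule partial_embedding_I)
  show "(0, 0) \<in> extend_embedding sc w G"
    using subset_extend_embedding partial_embedding_D(1)[OF G] by blast
qed (fact single_valued_extend_embedding single_valued_converse_extend_embedding
    add_mem_extend_embedding scale_mem_Domain_extend_embedding keys_subset_Domain_extend_embedding)+

end

lemma partial_embedding_zero:
  assumes "is_vector_space sc"
  shows "partial_embedding sc {(0, 0)}"
  by (rule partial_embedding_I) (auto simp: single_valued_def vector_space_laws[OF assms])

lemma ex_total_partial_embedding:
  fixes sc :: "'l::division_ring \<Rightarrow> 'w::ab_group_add \<Rightarrow> 'w"
  assumes vs: "is_vector_space sc" and same_char: "CHAR('k::division_ring) = CHAR('l)"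
  shows "\<exists>G :: ('w \<times> ('w \<Rightarrow>\<^sub>0 'k)) set. partial_embedding sc G \<and> Domain G = UNIV"
proof -
  let ?P = "{G :: ('w \<times> ('w \<Rightarrow>\<^sub>0 'k)) set. partial_embedding sc G}"
  have "\<exists>M\<in>?P. \<forall>X\<in>?P. M \<subseteq> X \<longrightarrow> X = M"
  proof (rule Zorn_Lemma2, intro ballI)
    fix C
    assume C: "C \<in> chains ?P"
    show "\<exists>U\<in>?P. \<forall>X\<in>C. X \<subseteq> U"
    proof (cases "C = {}")
      case True
      then show ?thesis using partial_embedding_zero[OF vs] by blast
    next
      case False
      then show ?thesis using partial_embedding_Union[OF C False] by blast
    qed
  qed
  then obtain G :: "('w \<times> ('w \<Rightarrow>\<^sub>0 'k)) set" where G: "partial_embedding sc G"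
    and max: "\<And>X. partial_embedding sc X \<Longrightarrow> G \<subseteq> X \<Longrightarrow> X = G"
    by blast
  have "w \<in> Domain G" for w
  proof (rule ccontr)
    assume w: "w \<notin> Domain G"
    then have "extend_embedding sc w G = G"
      using max partial_embedding_extend_embedding[OF vs same_char G w]
        subset_extend_embedding[OF vs same_char G w] by blast
    then show False
      using in_Domain_extend_embedding[OF vs same_char G w] w by simp
  qed
  with G show ?thesis
    by blast
qed

theorem ex_additive_inj_into_free:
  fixes sc :: "'l::division_ring \<Rightarrow> 'w::ab_group_add \<Rightarrow> 'w"
  assumes "is_vector_space sc" and "CHAR('k::division_ring) = CHAR('l)"
  shows "\<exists>h :: 'w \<Rightarrow> ('w \<Rightarrow>\<^sub>0 'k). additive h \<and> inj h"
proof -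
  obtain G :: "('w \<times> ('w \<Rightarrow>\<^sub>0 'k)) set" where G: "partial_embedding sc G" and "Domain G = UNIV"
    using ex_total_partial_embedding[OF assms] by blast
  define h where "h x = (THE a. (x, a) \<in> G)" for x
  have h_eq: "h x = a" if "(x, a) \<in> G" for x a
    unfolding h_def using that single_valuedD[OF partial_embedding_D(2)[OF G]] by blast
  have graph: "(x, h x) \<in> G" for x
    using \<open>Domain G = UNIV\<close> h_eq by (metis DomainE UNIV_I)
  have "additive h"
  proof
    show "h (x + y) = h x + h y" for x y
      using h_eq[OF partial_embedding_D(4)[OF G graph graph]] .
  qed
  moreover have "inj h"
  proof (rule injI)
    fix x y
    assume "h x = h y"
    then have "(h x, x) \<in> G\<inverse>" and "(h x, y) \<in> G\<inverse>"
      using graph[of x] graph[of y] by simp_all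
    then show "x = y"
      using single_valuedD[OF partial_embedding_D(3)[OF G]] by blast
  qed
  ultimately show ?thesis
    by blast
qed

section \<open>Infinite vector spaces of equal characteristic\<close>

definition pm_scale :: "'k::division_ring \<Rightarrow> ('w \<Rightarrow>\<^sub>0 'k) \<Rightarrow> ('w \<Rightarrow>\<^sub>0 'k)" where
  "pm_scale c f = Poly_Mapping.map ((*) c) f"

lemma lookup_pm_scale [simp]: "Poly_Mapping.lookup (pm_scale c f) w = c * Poly_Mapping.lookup f w"
  by (simp add: pm_scale_def map.rep_eq when_def)

lemma is_vector_space_pm_scale: "is_vector_space pm_scale"
  unfolding is_vector_space_def
  by (intro conjI allI; rule poly_mapping_eqI) (simp_all add: lookup_add algebra_simps)

lemma infinite_UNIV_poly_mapping:
  assumes "infinite (UNIV :: 'w set)"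
  shows "infinite (UNIV :: ('w \<Rightarrow>\<^sub>0 'k::zero_neq_one) set)"
proof
  assume "finite (UNIV :: ('w \<Rightarrow>\<^sub>0 'k) set)"
  then have "finite (range (\<lambda>w::'w. Poly_Mapping.single w (1::'k)))"
    by (rule finite_subset[rotated]) simp
  moreover have "inj (\<lambda>w::'w. Poly_Mapping.single w (1::'k))"
    by (rule injI) (metis lookup_single_eq lookup_single_not_eq zero_neq_one)
  ultimately show False
    using assms finite_imageD by blast
qed

definition pm_graph :: "('w \<Rightarrow>\<^sub>0 'k::zero) \<Rightarrow> ('w \<times> 'k) list" where
  "pm_graph f = (SOME xs. set xs = (\<lambda>w. (w, Poly_Mapping.lookup f w)) ` Poly_Mapping.keys f)"

lemma mem_pm_graph: "(w, c) \<in> set (pm_graph f) \<longleftrightarrow> c = Poly_Mapping.lookup f w \<and> c \<noteq> 0"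
proof -
  have "set (pm_graph f) = (\<lambda>w. (w, Poly_Mapping.lookup f w)) ` Poly_Mapping.keys f"
    unfolding pm_graph_def by (rule someI_ex) (simp add: finite_list)
  then show ?thesis
    by (auto simp: in_keys_iff)
qed

lemma inj_pm_graph: "inj pm_graph"
proof (rule injI)
  fix f g :: "'w \<Rightarrow>\<^sub>0 'k::zero"
  assume "pm_graph f = pm_graph g"
  then have "c = Poly_Mapping.lookup f w \<and> c \<noteq> 0 \<longleftrightarrow> c = Poly_Mapping.lookup g w \<and> c \<noteq> 0" for w c
    by (metis mem_pm_graph)
  then show "f = g"
    by (intro poly_mapping_eqI) metis
qed

text \<open>Lists are coded by iterated pairing \<open>'a \<times> 'a \<approx> 'a\<close>, tagged with their length.\<close>

lemma ex_inj_lists_infinite: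
  assumes "infinite (UNIV :: 'a set)"
  shows "\<exists>enc :: 'a list \<Rightarrow> 'a. inj enc"
proof -
  obtain P :: "'a \<times> 'a \<Rightarrow> 'a" where "bij_betw P (UNIV \<times> UNIV) UNIV"
    using card_of_Times_same_infinite[OF assms] card_of_ordIso by blast
  then have P: "inj P"
    by (simp add: bij_betw_def)
  obtain N :: "nat \<Rightarrow> 'a" where N: "inj N"
    using infinite_countable_subset[OF assms] by blast
  define code where "code = rec_list (N 0) (\<lambda>x xs r. P (x, r))"
  have code_simps: "code [] = N 0" "code (x # xs) = P (x, code xs)" for x xs
    by (simp_all add: code_def)
  have code_inj: "xs = ys" if "length xs = length ys" and "code xs = code ys" for xs ys
    using that
  proof (induction xs arbitrary: ys)
    case (Cons x xs)
    then obtain y ys' where ys: "ys = y # ys'"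
      by (cases ys) auto
    with Cons.prems have "(x, code xs) = (y, code ys')"
      by (auto simp: code_simps dest: injD[OF P])
    with Cons.IH Cons.prems ys show ?case
      by simp
  qed simp
  have "inj (\<lambda>xs. P (N (length xs), code xs))"
  proof (rule injI)
    fix xs ys
    assume "P (N (length xs), code xs) = P (N (length ys), code ys)"
    then have "N (length xs) = N (length ys)" and "code xs = code ys"
      by (auto dest: injD[OF P])
    then show "xs = ys"
      using code_inj injD[OF N] by blast
  qed
  then show ?thesis
    by blast
qed

lemma ex_inj_poly_mapping_prod:
  assumes "infinite (UNIV :: 'w set)"
  shows "\<exists>e :: ('w \<Rightarrow>\<^sub>0 'k::zero) \<Rightarrow> 'w \<times> 'k. inj e"
proof -
  have "infinite (UNIV :: ('w \<times> 'k) set)"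
    using assms by (simp add: finite_prod)
  then obtain enc :: "('w \<times> 'k) list \<Rightarrow> 'w \<times> 'k" where "inj enc"
    using ex_inj_lists_infinite by blast
  then have "inj (enc \<circ> pm_graph)"
    using inj_pm_graph by (rule inj_compose)
  then show ?thesis
    by blast
qed

theorem th_loc_trace_defines_vs_same_char:
  fixes sc :: "'k::division_ring \<Rightarrow> 'v::ab_group_add \<Rightarrow> 'v"
    and sc' :: "'l::division_ring \<Rightarrow> 'w::ab_group_add \<Rightarrow> 'w"
    and h :: "'w \<times> 'k \<Rightarrow> 'c"
  assumes vs: "is_vector_space sc" and vs': "is_vector_space sc'"
    and inf: "infinite (UNIV :: 'v set)" and inf': "infinite (UNIV :: 'w set)"
    and same_char: "CHAR('k) = CHAR('l)" and "inj h"
  shows "th_loc_trace_defines TYPE('c) TYPE('c) var (vs_struct sc) var (vs_struct sc')"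
proof -
  let ?F = "vs_struct (pm_scale :: 'k \<Rightarrow> ('w \<Rightarrow>\<^sub>0 'k) \<Rightarrow> ('w \<Rightarrow>\<^sub>0 'k))"
  obtain \<psi> :: "'w \<Rightarrow> ('w \<Rightarrow>\<^sub>0 'k)" where "additive \<psi>" and "inj \<psi>"
    using ex_additive_inj_into_free[OF vs' same_char] by blast
  obtain e :: "('w \<Rightarrow>\<^sub>0 'k) \<Rightarrow> 'w \<times> 'k" where "inj e"
    using ex_inj_poly_mapping_prod[OF inf'] by blast
  define hF where "hF = h \<circ> e"
  define hW where "hW = (\<lambda>w. h (w, 0))"
  have "inj hF"
    unfolding hF_def using \<open>inj e\<close> \<open>inj h\<close> by (rule inj_compose[rotated])
  have "inj hW"
    using \<open>inj h\<close> unfolding hW_def inj_def by blast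
  have "elem_equiv var (vs_struct sc) ?F"
    by (rule elem_equiv_infinite_vs[OF vs inf is_vector_space_pm_scale infinite_UNIV_poly_mapping[OF inf']])
  then have "elem_equiv var (vs_struct sc) (transport hF ?F)"
    by (rule elem_equiv_trans) (simp add: elem_equiv_transport[OF \<open>inj hF\<close>])
  moreover have "elem_equiv var (vs_struct sc') (transport hW (vs_struct sc'))"
    by (rule elem_equiv_transport[OF \<open>inj hW\<close>]) simp
  moreover have "loc_trace_defines var ?F var (vs_struct sc')"
    by (rule loc_trace_defines_expansion[OF _ definable_vs_if_definable_grp
          loc_trace_defines_grp_vs[OF vs' inf' \<open>additive \<psi>\<close> \<open>inj \<psi>\<close>]]) simp
  then have "loc_trace_defines var (transport hF ?F) var (transport hW (vs_struct sc'))"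
    by (intro loc_trace_defines_transport[OF \<open>inj hF\<close> \<open>inj hW\<close>]) simp_all
  ultimately show ?thesis
    unfolding th_loc_trace_defines_def
    by (intro exI[of _ "transport hF ?F"] exI[of _ "transport hW (vs_struct sc')"] conjI
        is_struct_transport)
qed

theorem proposition4p1:
  fixes sc :: "'k::division_ring \<Rightarrow> 'v::ab_group_add \<Rightarrow> 'v"
    and sc' :: "'l::division_ring \<Rightarrow> 'w::ab_group_add \<Rightarrow> 'w"
  shows "(is_vector_space sc \<longrightarrow>
            loc_trace_equiv TYPE('v) TYPE('v) var (vs_struct sc) gar (grp_struct TYPE('v)))
       \<and> (is_vector_space sc \<and> is_vector_space sc' \<and>
            infinite (UNIV :: 'v set) \<and> infinite (UNIV :: 'w set) \<and> CHAR('k) = CHAR('l) \<longrightarrow>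
            loc_trace_equiv TYPE('v \<times> 'w \<times> 'k \<times> 'l) TYPE('v \<times> 'w \<times> 'k \<times> 'l)
              var (vs_struct sc) var (vs_struct sc'))"
proof (intro conjI impI)
  assume "is_vector_space sc"
  then show "loc_trace_equiv TYPE('v) TYPE('v) var (vs_struct sc) gar (grp_struct TYPE('v))"
    by (rule loc_trace_equiv_vs_grp)
next
  assume hyps: "is_vector_space sc \<and> is_vector_space sc' \<and>
    infinite (UNIV :: 'v set) \<and> infinite (UNIV :: 'w set) \<and> CHAR('k) = CHAR('l)"
  then have "th_loc_trace_defines TYPE('v \<times> 'w \<times> 'k \<times> 'l) TYPE('v \<times> 'w \<times> 'k \<times> 'l)
      var (vs_struct sc) var (vs_struct sc')"
    by (intro th_loc_trace_defines_vs_same_char[where h = "\<lambda>(w, c). (undefined, w, c, undefined)"])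
       (auto simp: inj_def)
  moreover from hyps have "th_loc_trace_defines TYPE('v \<times> 'w \<times> 'k \<times> 'l) TYPE('v \<times> 'w \<times> 'k \<times> 'l)
      var (vs_struct sc') var (vs_struct sc)"
    by (intro th_loc_trace_defines_vs_same_char[where h = "\<lambda>(v, c). (v, undefined, undefined, c)"])
       (auto simp: inj_def)
  ultimately show "loc_trace_equiv TYPE('v \<times> 'w \<times> 'k \<times> 'l) TYPE('v \<times> 'w \<times> 'k \<times> 'l)
      var (vs_struct sc) var (vs_struct sc')"
    unfolding loc_trace_equiv_def ..
qed

end
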